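(* Consider the setting: $\mathcal{S}$ a state space, $\mathcal{A}$ a finite action space, $\rho$ a distribution on $\mathcal{S}$, $\pi_{\mathrm{ref}}$ a full-support policy, $\beta>0$, $R>0$, ground-truth reward $r^*:\mathcal{S}\times\mathcal{A}\to[0,R]$, and a finite policy class $\Pi$ with (I) $\pi^*_{r^*}\in\Pi$ and (II) $|\log(\pi(a|s)/\pi_{\mathrm{ref}}(a|s))|\le R/\beta$ for all $\pi\in\Pi$ and $(s,a)$. Suppose a sequentially generated dataset $\{(s^t,a^t,\tilde a^t,y^t,\pi^t)\}_{t=1}^T$ has policies $\pi^1,\dots,\pi^T\in\mathrm{conv}(\Pi)$ produced by a no-regret online learning algorithm with $\sum_{t=1}^T[J_\beta(\pi^*_{r^*})-J_\beta(\pi^t)]=\tilde O(\mathcal{C}(\Pi)\sqrt T)$ for some structural complexity measure $\mathcal{C}(\Pi)$. Then, as long as $T=\tilde\Omega\big(\beta^{-2}\mathcal{C}(\Pi)^2\kappa^2(e^{2R/\beta})\big)$, running RPO (with $\mathrm{conv}(\Pi)$, $\mathcal{R}^\Pi$, the dataset, and an appropriately chosen parameter $\eta$) yields a policy $\pi_{\mathrm{Dstl}}$ with $$J_\beta(\pi^*_{r^*})-J_\beta(\pi_{\mathrm{Dstl}})=\tilde O\big(e^{2R}T^{-1/2}\big),$$ where $\kappa(x)=\frac{(x-1)^2}{x-1-\log x}$, and $\tilde O,\tilde\Omega$ hide absolute constants and polylogarithmic factors (in $|\Pi|$, $T$ and the confidence level).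
   Context: Definitions: $\pi^*_r(a|s)\propto\pi_{\mathrm{ref}}(a|s)e^{r(s,a)/\beta}$; $J_\beta(\pi):=\mathbb{E}_{s\sim\rho}[\mathbb{E}_{a\sim\pi(\cdot|s)}r^*(s,a)-\beta\mathrm{KL}(\pi(\cdot|s)\|\pi_{\mathrm{ref}}(\cdot|s))]$; $\mathrm{KL}(\pi\|\pi_{\mathrm{ref}}):=\mathbb{E}_{s\sim\rho}\mathrm{KL}(\pi(\cdot|s)\|\pi_{\mathrm{ref}}(\cdot|s))$; $\mathrm{conv}(\Pi)$ is the set of finite pointwise convex combinations of policies in $\Pi$. Bradley–Terry preferences: $\mathbb{P}_r(y=1|s,a,\tilde a)=\sigma(r(s,a)-r(s,\tilde a))$, $\sigma(x)=1/(1+e^{-x})$. A dataset $\{(s^i,a^i,\tilde a^i,y^i,\pi^i)\}_i$ is sequentially generated if each $\pi^i$ is chosen as a function of previous tuples only, then $s^i\sim\rho$, $a^i\sim\pi^i(\cdot|s^i)$, $\tilde a^i\sim\pi_{\mathrm{ref}}(\cdot|s^i)$, $y^i\sim\mathbb{P}_{r^*}(\cdot|s^i,a^i,\tilde a^i)$. $\mathcal{R}^\Pi:=\{r_\pi:\pi\in\Pi\}$, $r_\pi(s,a):=\mathrm{Clip}_{[0,R]}[\beta\log\frac{\pi(a|s)}{\pi_{\mathrm{ref}}(a|s)}-\min_{a'}\beta\log\frac{\pi(a'|s)}{\pi_{\mathrm{ref}}(a'|s)}]$. $L_{\mathcal{D}}(r):=\frac1{|\mathcal{D}|}\sum_i[-y^i\log\sigma(r(s^i,a^i)-r(s^i,\tilde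 a^i))-(1-y^i)\log\sigma(r(s^i,\tilde a^i)-r(s^i,a^i))]$. RPO$(\tilde\Pi,\mathcal{R},\mathcal{D},\eta)$ returns $(\pi_{\mathrm{Dstl}},\hat r_{\mathrm{Dstl}})$ solving $\max_{\pi\in\tilde\Pi}\min_{r\in\mathcal{R}}\{\mathbb{E}_{s\sim\rho,a\sim\pi,\tilde a\sim\pi_{\mathrm{ref}}}[r(s,a)-r(s,\tilde a)]-\beta\mathrm{KL}(\pi\|\pi_{\mathrm{ref}})+\eta^{-1}L_{\mathcal{D}}(r)\}$. *)

theory Defs
  imports "HOL-Probability.Probability"
begin

definition is_policy :: "'a set \<Rightarrow> ('s \<Rightarrow> 'a \<Rightarrow> real) \<Rightarrow> bool" where
  "is_policy A p \<longleftrightarrow> (\<forall>s. (\<forall>a. 0 \<le> p s a) \<and> (\<forall>a. a \<notin> A \<longrightarrow> p s a = 0) \<and> (\<Sum>a\<in>A. p s a) = 1)"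

definition pi_star :: "'a set \<Rightarrow> ('s \<Rightarrow> 'a \<Rightarrow> real) \<Rightarrow> real \<Rightarrow> ('s \<Rightarrow> 'a \<Rightarrow> real) \<Rightarrow> 's \<Rightarrow> 'a \<Rightarrow> real" where
  "pi_star A pref \<beta> r s a =
     (if a \<in> A then pref s a * exp (r s a / \<beta>) / (\<Sum>b\<in>A. pref s b * exp (r s b / \<beta>)) else 0)"

definition KL_s :: "'a set \<Rightarrow> ('s \<Rightarrow> 'a \<Rightarrow> real) \<Rightarrow> ('s \<Rightarrow> 'a \<Rightarrow> real) \<Rightarrow> 's \<Rightarrow> real" where
  "KL_s A p pref s = (\<Sum>a\<in>A. if p s a = 0 then 0 else p s a * ln (p s a / pref s a))"

definition KL_pol :: "'s pmf \<Rightarrow> 'a set \<Rightarrow> ('s \<Rightarrow> 'a \<Rightarrow> real) \<Rightarrow> ('s \<Rightarrow> 'a \<Rightarrow> real) \<Rightarrow> real" where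
  "KL_pol \<rho> A p pref = measure_pmf.expectation \<rho> (\<lambda>s. KL_s A p pref s)"

definition J_beta :: "'s pmf \<Rightarrow> 'a set \<Rightarrow> ('s \<Rightarrow> 'a \<Rightarrow> real) \<Rightarrow> real \<Rightarrow> ('s \<Rightarrow> 'a \<Rightarrow> real)
    \<Rightarrow> ('s \<Rightarrow> 'a \<Rightarrow> real) \<Rightarrow> real" where
  "J_beta \<rho> A pref \<beta> r p =
     measure_pmf.expectation \<rho> (\<lambda>s. (\<Sum>a\<in>A. p s a * r s a) - \<beta> * KL_s A p pref s)"

definition conv_pol :: "('s \<Rightarrow> 'a \<Rightarrow> real) set \<Rightarrow> ('s \<Rightarrow> 'a \<Rightarrow> real) set" where
  "conv_pol P = {p. \<exists>F w. finite F \<and> F \<subseteq> P \<and> (\<forall>q\<in>F. 0 \<le> w q) \<and> (\<Sum>q\<in>F. w q) = 1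
                       \<and> p = (\<lambda>s a. \<Sum>q\<in>F. w q * q s a)}"

definition reward_of :: "'a set \<Rightarrow> ('s \<Rightarrow> 'a \<Rightarrow> real) \<Rightarrow> real \<Rightarrow> real \<Rightarrow> ('s \<Rightarrow> 'a \<Rightarrow> real) \<Rightarrow> 's \<Rightarrow> 'a \<Rightarrow> real" where
  "reward_of A pref \<beta> R p s a =
     max 0 (min R (\<beta> * ln (p s a / pref s a) - Min ((\<lambda>a'. \<beta> * ln (p s a' / pref s a')) ` A)))"

definition reward_class :: "'a set \<Rightarrow> ('s \<Rightarrow> 'a \<Rightarrow> real) \<Rightarrow> real \<Rightarrow> real \<Rightarrow> ('s \<Rightarrow> 'a \<Rightarrow> real) set
    \<Rightarrow> ('s \<Rightarrow> 'a \<Rightarrow> real) set" where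
  "reward_class A pref \<beta> R P = reward_of A pref \<beta> R ` P"

definition sigmoid :: "real \<Rightarrow> real" where
  "sigmoid x = 1 / (1 + exp (- x))"

text \<open>Data points (s, a, a~, y); y = True means y = 1 (a preferred to a~).\<close>
definition bt_loss :: "('s \<Rightarrow> 'a \<Rightarrow> real) \<Rightarrow> 's \<times> 'a \<times> 'a \<times> bool \<Rightarrow> real" where
  "bt_loss r d = (case d of (s, a, a', y) \<Rightarrow>
      (if y then - ln (sigmoid (r s a - r s a')) else - ln (sigmoid (r s a' - r s a))))"

definition L_D :: "('s \<times> 'a \<times> 'a \<times> bool) list \<Rightarrow> ('s \<Rightarrow> 'a \<Rightarrow> real) \<Rightarrow> real" where
  "L_D D r = (1 / real (length D)) * (\<Sum>i<length D. bt_loss r (D ! i))"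

definition rpo_obj :: "'s pmf \<Rightarrow> 'a set \<Rightarrow> ('s \<Rightarrow> 'a \<Rightarrow> real) \<Rightarrow> real \<Rightarrow> real
    \<Rightarrow> ('s \<times> 'a \<times> 'a \<times> bool) list \<Rightarrow> ('s \<Rightarrow> 'a \<Rightarrow> real) \<Rightarrow> ('s \<Rightarrow> 'a \<Rightarrow> real) \<Rightarrow> real" where
  "rpo_obj \<rho> A pref \<beta> \<eta> D p r =
     measure_pmf.expectation \<rho> (\<lambda>s. (\<Sum>a\<in>A. p s a * r s a) - (\<Sum>a\<in>A. pref s a * r s a))
     - \<beta> * KL_pol \<rho> A p pref + L_D D r / \<eta>"

definition RPO_solutions :: "'s pmf \<Rightarrow> 'a set \<Rightarrow> ('s \<Rightarrow> 'a \<Rightarrow> real) \<Rightarrow> real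
    \<Rightarrow> ('s \<Rightarrow> 'a \<Rightarrow> real) set \<Rightarrow> ('s \<Rightarrow> 'a \<Rightarrow> real) set
    \<Rightarrow> ('s \<times> 'a \<times> 'a \<times> bool) list \<Rightarrow> real \<Rightarrow> ('s \<Rightarrow> 'a \<Rightarrow> real) set" where
  "RPO_solutions \<rho> A pref \<beta> PT Rs D \<eta> =
     {p \<in> PT. \<forall>q\<in>PT. (INF r\<in>Rs. rpo_obj \<rho> A pref \<beta> \<eta> D q r) \<le> (INF r\<in>Rs. rpo_obj \<rho> A pref \<beta> \<eta> D p r)}"

definition pol_pmf :: "('s \<Rightarrow> 'a \<Rightarrow> real) \<Rightarrow> 's \<Rightarrow> 'a pmf" where
  "pol_pmf p s = embed_pmf (\<lambda>a. p s a)"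

text \<open>Sequential data generation: the policy for round i+1 is alg applied to the
  first i data points (the policies pi^j are determined by earlier tuples).\<close>
primrec gen_data :: "'s pmf \<Rightarrow> (('s \<times> 'a \<times> 'a \<times> bool) list \<Rightarrow> ('s \<Rightarrow> 'a \<Rightarrow> real))
    \<Rightarrow> ('s \<Rightarrow> 'a \<Rightarrow> real) \<Rightarrow> ('s \<Rightarrow> 'a \<Rightarrow> real) \<Rightarrow> nat \<Rightarrow> ('s \<times> 'a \<times> 'a \<times> bool) list pmf" where
  "gen_data \<rho> alg pref r 0 = return_pmf []"
| "gen_data \<rho> alg pref r (Suc n) =
     bind_pmf (gen_data \<rho> alg pref r n) (\<lambda>h.
     bind_pmf \<rho> (\<lambda>s.
     bind_pmf (pol_pmf (alg h) s) (\<lambda>a.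
     bind_pmf (pol_pmf pref s) (\<lambda>a'.
     map_pmf (\<lambda>y. h @ [(s, a, a', y)]) (bernoulli_pmf (sigmoid (r s a - r s a')))))))"

definition regret :: "'s pmf \<Rightarrow> 'a set \<Rightarrow> ('s \<Rightarrow> 'a \<Rightarrow> real) \<Rightarrow> real \<Rightarrow> ('s \<Rightarrow> 'a \<Rightarrow> real)
    \<Rightarrow> (('s \<times> 'a \<times> 'a \<times> bool) list \<Rightarrow> ('s \<Rightarrow> 'a \<Rightarrow> real)) \<Rightarrow> ('s \<times> 'a \<times> 'a \<times> bool) list \<Rightarrow> real" where
  "regret \<rho> A pref \<beta> r alg h =
     (\<Sum>t<length h. J_beta \<rho> A pref \<beta> r (pi_star A pref \<beta> r) - J_beta \<rho> A pref \<beta> r (alg (take t h)))"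

definition kappa :: "real \<Rightarrow> real" where
  "kappa x = (x - 1)^2 / (x - 1 - ln x)"

text \<open>Base of the hidden polylogarithmic factors (in |Pi|, T, 1/delta); always \<ge> 1.\<close>
definition polylog_base :: "nat \<Rightarrow> nat \<Rightarrow> real \<Rightarrow> real" where
  "polylog_base N T \<delta> = ln (exp 1 * real N * real T / \<delta>)"

end

theory Submission
  imports Defs
begin

(* Write opt for the optimal regularised policy of rstar. By the Gibbs variational identity
   J opt - J p = beta * E KL(p || opt), so the regret of the online learner is beta times the summed
   KL divergences of its policies from opt. The implicit reward ropt of opt lies in the reward class
   and differs from rstar by a state-dependent shift. Testing the max-min value of an RPO solution p
   against ropt, and that of opt against its minimising reward r, bounds J opt - J p by the
   advantage gap of rstar over r under opt minus (excess log-likelihood of r over ropt) / eta.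
   A change of measure from opt to the learner's policies bounds the advantage gap by their KL
   divergences from opt, which the regret bound pays for once T is large, plus the squared reward
   error of r. Since the square root of the label likelihood ratio, compensated by the Bhattacharyya
   affinity, is a supermartingale, a union bound over the finite reward class shows that with
   probability 1 - delta the squared reward error is at most the excess log-likelihood plus
   log(|Pi| / delta). Taking eta = 1 / sqrt T balances the two terms. *)

lemma young_mult_le:
  fixes x t l :: real
  assumes "0 < l"
  shows "x * t \<le> l / 2 * x\<^sup>2 + t\<^sup>2 / (2 * l)"
proof -
  have "0 \<le> (l * x - t)\<^sup>2" by simp
  then have "2 * l * (x * t) \<le> l\<^sup>2 * x\<^sup>2 + t\<^sup>2" by (simp add: power2_eq_square algebra_simps)
  then show ?thesis using assms by (simp add: field_simps power2_eq_square)
qed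

lemma ln_le_two_sqrt_minus_two:
  assumes "0 < u"
  shows "ln u \<le> 2 * sqrt u - 2"
proof -
  have "ln (sqrt u) \<le> sqrt u - 1" using assms by (intro ln_le_minus_one) simp
  moreover have "ln (sqrt u) = ln u / 2" using assms by (simp add: ln_sqrt)
  ultimately show ?thesis by simp
qed

lemma sq_diff_one_le_ln_gap:
  fixes u :: real
  assumes "0 < u" "u \<le> 16"
  shows "(u - 1)\<^sup>2 \<le> 25 * (u - 1 - ln u)"
proof -
  define w where "w = sqrt u"
  have "sqrt u \<le> sqrt (4\<^sup>2)" using assms by (intro real_sqrt_le_mono) simp
  then have w: "w\<^sup>2 = u" "0 \<le> w" "w \<le> 4" using assms by (auto simp: w_def)
  have "(w - 1)\<^sup>2 \<le> u - 1 - ln u"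
    using ln_le_two_sqrt_minus_two[OF assms(1)] w by (simp add: w_def power2_diff)
  have "(w + 1)\<^sup>2 \<le> 5\<^sup>2" using w by (intro power_mono) auto
  have "(u - 1)\<^sup>2 = (w - 1)\<^sup>2 * (w + 1)\<^sup>2"
    using w(1) by (simp flip: power_mult_distrib add: algebra_simps power2_eq_square)
  also have "\<dots> \<le> (w - 1)\<^sup>2 * 25" using \<open>(w + 1)\<^sup>2 \<le> 5\<^sup>2\<close> by (intro mult_left_mono) auto
  also have "\<dots> \<le> 25 * (u - 1 - ln u)" using \<open>(w - 1)\<^sup>2 \<le> u - 1 - ln u\<close> by simp
  finally show ?thesis .
qed

lemma exp_one_minus_mult_le_1:
  fixes m :: real
  assumes "0 \<le> m"
  shows "exp (1 - m) * m \<le> 1"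
proof -
  have "m \<le> exp (m - 1)" using exp_ge_add_one_self[of "m - 1"] by simp
  then have "exp (1 - m) * m \<le> exp (1 - m) * exp (m - 1)" by (intro mult_left_mono) auto
  then show ?thesis by (simp flip: exp_add)
qed

lemma min_inverse_le_4_mult:
  fixes w :: real
  assumes "0 < w"
  shows "min w (1 / w) \<le> 4 * (w / (1 + w)\<^sup>2)"
proof (cases "w \<le> 1")
  case True
  have "(1 + w)\<^sup>2 \<le> 2\<^sup>2" using True assms by (intro power_mono) auto
  then have "w / 4 \<le> w / (1 + w)\<^sup>2" using assms by (intro divide_left_mono) auto
  then show ?thesis by (intro min.coboundedI1) linarith
next
  case False
  have "(1 + w)\<^sup>2 \<le> (2 * w)\<^sup>2" using False by (intro power_mono) auto
  then have "1 / w \<le> 4 * (w / (1 + w)\<^sup>2)" using assms by (simp add: field_simps power2_eq_square)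
  then show ?thesis by (rule min.coboundedI2)
qed

lemma sqrt_mult_sqrt_eq_exp_half_ln:
  assumes "0 < p" "0 < q"
  shows "q * exp ((ln p - ln q) / 2) = sqrt p * sqrt q"
proof -
  have half: "exp (ln x / 2) = sqrt x" if "0 < x" for x :: real
    using that by (metis exp_ln ln_sqrt real_sqrt_gt_zero less_imp_le)
  have "exp ((ln p - ln q) / 2) = exp (ln p / 2) / exp (ln q / 2)"
    by (simp add: exp_diff[symmetric] diff_divide_distrib)
  then have "q * exp ((ln p - ln q) / 2) = q / sqrt q * sqrt p"
    using assms by (simp add: half)
  also have "q / sqrt q = sqrt q" using assms by (simp add: real_div_sqrt)
  finally show ?thesis by (simp add: mult.commute)
qed

lemma sq_diff_le_bernoulli_hellinger:
  assumes "0 \<le> p" "p \<le> 1" "0 \<le> q" "q \<le> 1"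
  shows "(p - q)\<^sup>2 / 4 \<le> 1 - sqrt p * sqrt q - sqrt (1 - p) * sqrt (1 - q)"
proof -
  define u v u' v' where "u = sqrt p" "v = sqrt q" "u' = sqrt (1 - p)" "v' = sqrt (1 - q)"
  have sq: "u\<^sup>2 = p" "v\<^sup>2 = q" "u'\<^sup>2 = 1 - p" "v'\<^sup>2 = 1 - q" using assms by (auto simp: u_v_u'_v'_def)
  have nn: "0 \<le> u" "0 \<le> v" "0 \<le> u'" "0 \<le> v'" using assms by (auto simp: u_v_u'_v'_def)
  have "u \<le> 1" "v \<le> 1" "u' \<le> 1" "v' \<le> 1" using assms by (auto simp: u_v_u'_v'_def)
  then have sums: "(u + v)\<^sup>2 \<le> 2\<^sup>2" "(u' + v')\<^sup>2 \<le> 2\<^sup>2" using nn by (intro power_mono; simp)+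
  have gap: "1 - u * v - u' * v' = (u - v)\<^sup>2 / 2 + (u' - v')\<^sup>2 / 2"
    using sq by (simp add: power2_diff field_simps)
  have "(p - q)\<^sup>2 = (u - v)\<^sup>2 * (u + v)\<^sup>2" using sq by (simp add: power2_eq_square algebra_simps)
  also have "\<dots> \<le> (u - v)\<^sup>2 * 4" using sums by (intro mult_left_mono) auto
  finally have 1: "(p - q)\<^sup>2 \<le> (u - v)\<^sup>2 * 4" .
  have "p - q = (v' - u') * (u' + v')" using sq by (simp add: algebra_simps power2_eq_square)
  then have "(p - q)\<^sup>2 = (u' - v')\<^sup>2 * (u' + v')\<^sup>2" by (simp add: power_mult_distrib power2_commute)
  also have "\<dots> \<le> (u' - v')\<^sup>2 * 4" using sums by (intro mult_left_mono) auto
  finally have 2: "(p - q)\<^sup>2 \<le> (u' - v')\<^sup>2 * 4" .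
  have "(p - q)\<^sup>2 / 4 \<le> 1 - u * v - u' * v'" using gap 1 2 by linarith
  then show ?thesis by (simp add: u_v_u'_v'_def)
qed

lemma le_kappa:
  fixes x :: real
  assumes "1 < x"
  shows "0 < x - 1 - ln x" "x \<le> kappa x"
proof -
  have "ln x \<le> 2 * sqrt x - 2" using assms by (intro ln_le_two_sqrt_minus_two) simp
  moreover have "0 < (sqrt x - 1)\<^sup>2" using assms by simp
  then have "2 * sqrt x - 2 < x - 1" using assms by (simp add: power2_diff)
  ultimately show pos: "0 < x - 1 - ln x" by simp
  have "ln (1 / x) \<le> 1 / x - 1" using assms by (intro ln_le_minus_one) simp
  then have "1 - 1 / x \<le> ln x" using assms by (simp add: ln_div)
  then have "x * (1 - 1 / x) \<le> x * ln x" using assms by (intro mult_left_mono) auto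
  moreover have "x * (1 - 1 / x) = x - 1" using assms by (simp add: field_simps)
  moreover have "(x - 1)\<^sup>2 - x * (x - 1 - ln x) = x * ln x - (x - 1)"
    by (simp add: power2_eq_square algebra_simps)
  ultimately have "x * (x - 1 - ln x) \<le> (x - 1)\<^sup>2" by linarith
  then show "x \<le> kappa x" unfolding kappa_def using pos by (simp add: field_simps)
qed

lemma polylog_base_bounds:
  assumes N: "1 \<le> N" and T: "1 \<le> T" and \<delta>: "0 < \<delta>" "\<delta> < 1"
  shows "1 \<le> polylog_base N T \<delta>" "ln (real N / \<delta>) \<le> polylog_base N T \<delta>"
proof -
  have ge: "real N / \<delta> \<le> real N * real T / \<delta>" "1 \<le> real N / \<delta>"
    using N T \<delta> by (simp_all add: divide_right_mono le_divide_eq)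
  have "polylog_base N T \<delta> = ln (exp 1 * (real N * real T / \<delta>))"
    by (simp add: polylog_base_def mult.assoc)
  also have "\<dots> = 1 + ln (real N * real T / \<delta>)"
    using ge N T \<delta> by (subst ln_mult) auto
  finally have "polylog_base N T \<delta> = 1 + ln (real N * real T / \<delta>)" .
  moreover have "ln (real N / \<delta>) \<le> ln (real N * real T / \<delta>)" using ge by (intro ln_mono) auto
  moreover have "0 \<le> ln (real N / \<delta>)" using ge by simp
  ultimately show "1 \<le> polylog_base N T \<delta>" "ln (real N / \<delta>) \<le> polylog_base N T \<delta>"
    by linarith+
qed

text \<open>The regret bound of the online learner and the lower bound on \<open>T\<close> together make the
  entropy term of the change-of-measure inequality at most one on average.\<close>

lemma coverage_budget:
  fixes \<beta> c C \<kappa> pl T E K :: real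
  assumes \<beta>: "0 < \<beta>" and K: "0 \<le> K" and E: "0 \<le> E" "E \<le> \<kappa>" and pl: "1 \<le> pl" and T: "1 \<le> T"
    and regret: "\<beta> * K \<le> c * C * sqrt T * pl ^ k"
    and large_T: "225 * c\<^sup>2 * C\<^sup>2 * \<kappa>\<^sup>2 * pl ^ (2 * k + 2) / \<beta>\<^sup>2 \<le> T"
  shows "15 * E * K \<le> T"
proof -
  have "(pl ^ k)\<^sup>2 = pl ^ (k * 2)" by (rule power_mult[symmetric])
  also have "\<dots> \<le> pl ^ (2 * k + 2)" using pl by (intro power_increasing) auto
  finally have pk: "(pl ^ k)\<^sup>2 \<le> pl ^ (2 * k + 2)" .
  have "(15 * c * C * \<kappa> * pl ^ k)\<^sup>2 = 225 * c\<^sup>2 * C\<^sup>2 * \<kappa>\<^sup>2 * (pl ^ k)\<^sup>2"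
    by (simp add: power_mult_distrib)
  also have "\<dots> \<le> 225 * c\<^sup>2 * C\<^sup>2 * \<kappa>\<^sup>2 * pl ^ (2 * k + 2)"
    by (rule mult_left_mono[OF pk]) simp
  also have "\<dots> \<le> T * \<beta>\<^sup>2"
    using large_T \<beta> by (simp add: pos_divide_le_eq)
  finally have "15 * c * C * \<kappa> * pl ^ k \<le> sqrt (T * \<beta>\<^sup>2)"
    by (rule real_le_rsqrt)
  also have "sqrt (T * \<beta>\<^sup>2) = sqrt T * \<beta>"
    using \<beta> by (simp add: real_sqrt_mult)
  finally have sq: "15 * c * C * \<kappa> * pl ^ k \<le> sqrt T * \<beta>" .
  have "\<beta> * (15 * E * K) = 15 * E * (\<beta> * K)" by (simp add: ac_simps)
  also have "\<dots> \<le> 15 * \<kappa> * (\<beta> * K)" using E K \<beta> by (intro mult_right_mono) auto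
  also have "\<dots> \<le> 15 * \<kappa> * (c * C * sqrt T * pl ^ k)" using regret E by (intro mult_left_mono) auto
  also have "\<dots> = sqrt T * (15 * c * C * \<kappa> * pl ^ k)" by (simp add: ac_simps)
  also have "\<dots> \<le> sqrt T * (sqrt T * \<beta>)" using sq T by (intro mult_left_mono) auto
  also have "\<dots> = (sqrt T * sqrt T) * \<beta>" by (simp only: mult.assoc)
  also have "\<dots> = \<beta> * T" using T by (simp add: mult.commute)
  finally show ?thesis using \<beta> by simp
qed

section \<open>The logistic function\<close>

lemma sigmoid_pos: "0 < sigmoid x"
  by (simp add: sigmoid_def add_pos_pos)

lemma sigmoid_less_1: "sigmoid x < 1"
  by (simp add: sigmoid_def add_pos_pos)

lemma sigmoid_minus: "sigmoid (- x) = 1 - sigmoid x"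
proof -
  have "1 + exp x \<noteq> 0" using exp_gt_zero[of x] by linarith
  then show ?thesis by (simp add: sigmoid_def exp_minus add_divide_distrib[symmetric] field_simps)
qed

lemma has_real_derivative_sigmoid:
  "(sigmoid has_real_derivative (exp (- x) / (1 + exp (- x))\<^sup>2)) (at x)"
proof -
  have "1 + exp (- x) \<noteq> 0" using exp_gt_zero[of "- x"] by linarith
  then show ?thesis unfolding sigmoid_def
    by (auto intro!: derivative_eq_intros simp: power2_eq_square)
qed

text \<open>Mean value theorem: on \<open>[-R, R]\<close> the derivative \<open>w / (1 + w)\<^sup>2\<close>, \<open>w = exp (- z)\<close>, of
  the logistic function is at least \<open>exp (- R) / 4\<close>.\<close>

lemma abs_sigmoid_diff_ge:
  assumes "\<bar>x\<bar> \<le> R" "\<bar>y\<bar> \<le> R"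
  shows "exp (- R) / 4 * \<bar>x - y\<bar> \<le> \<bar>sigmoid x - sigmoid y\<bar>"
proof -
  have mono: "exp (- R) / 4 * (b - a) \<le> sigmoid b - sigmoid a"
    if "a < b" "\<bar>a\<bar> \<le> R" "\<bar>b\<bar> \<le> R" for a b
  proof -
    obtain z where z: "a < z" "z < b"
      and mvt: "sigmoid b - sigmoid a = (b - a) * (exp (- z) / (1 + exp (- z))\<^sup>2)"
      using MVT2[OF \<open>a < b\<close>, of sigmoid "\<lambda>z. exp (- z) / (1 + exp (- z))\<^sup>2"] has_real_derivative_sigmoid by blast
    define d where "d = exp (- z) / (1 + exp (- z))\<^sup>2"
    have "\<bar>z\<bar> \<le> R" using z that by auto
    then have "exp (- R) \<le> min (exp (- z)) (1 / exp (- z))"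
      by (simp add: exp_minus_inverse[of z, symmetric] abs_le_iff)
    also have "\<dots> \<le> 4 * d"
      unfolding d_def by (rule min_inverse_le_4_mult) simp
    finally have "exp (- R) / 4 * (b - a) \<le> d * (b - a)"
      using that(1) by (intro mult_right_mono) auto
    then show ?thesis using mvt by (simp add: d_def mult.commute)
  qed
  have ordered: "exp (- R) / 4 * \<bar>a - b\<bar> \<le> \<bar>sigmoid a - sigmoid b\<bar>"
    if "a \<le> b" "\<bar>a\<bar> \<le> R" "\<bar>b\<bar> \<le> R" for a b
  proof (cases "a = b")
    case False
    then have "exp (- R) / 4 * (b - a) \<le> sigmoid b - sigmoid a" using mono that by simp
    moreover have "\<bar>a - b\<bar> = b - a" using that(1) by simp
    moreover have "sigmoid b - sigmoid a \<le> \<bar>sigmoid a - sigmoid b\<bar>" by linarith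
    ultimately show ?thesis by (metis order_trans)
  qed simp
  show ?thesis
    using ordered[of x y] ordered[of y x] assms by (cases "x \<le> y") (auto simp: abs_minus_commute)
qed

lemma neg_ln_sigmoid_bounds: "0 \<le> - ln (sigmoid x)" "- ln (sigmoid x) \<le> 1 + \<bar>x\<bar>"
proof -
  show "0 \<le> - ln (sigmoid x)" using sigmoid_pos[of x] sigmoid_less_1[of x] by simp
  have "1 + exp (- x) \<le> exp 1 * exp \<bar>x\<bar>"
    using exp_ge_add_one_self[of 1] one_le_exp_iff[of "\<bar>x\<bar>"]
      mult_right_mono[of 2 "exp 1" "exp \<bar>x\<bar>"] by (smt (verit) exp_le_cancel_iff)
  then have "ln (1 + exp (- x)) \<le> ln (exp (1 + \<bar>x\<bar>))"
    by (intro ln_mono) (auto simp: add_pos_pos exp_add)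
  then have "ln (1 + exp (- x)) \<le> 1 + \<bar>x\<bar>" by simp
  then show "- ln (sigmoid x) \<le> 1 + \<bar>x\<bar>" by (simp add: sigmoid_def ln_div add_pos_pos)
qed

lemma bt_loss_bounds:
  assumes "\<And>s a. 0 \<le> r s a \<and> r s a \<le> R"
  shows "0 \<le> bt_loss r d" "bt_loss r d \<le> 1 + R"
proof -
  obtain s a a' y where d: "d = (s, a, a', y)" by (cases d) auto
  have "\<bar>r s a - r s a'\<bar> \<le> R" "\<bar>r s a' - r s a\<bar> \<le> R" using assms[of s a] assms[of s a'] by auto
  then show "0 \<le> bt_loss r d" "bt_loss r d \<le> 1 + R"
    using neg_ln_sigmoid_bounds[of "r s a - r s a'"] neg_ln_sigmoid_bounds[of "r s a' - r s a"]
    by (auto simp: bt_loss_def d)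
qed

definition sigmoid_affinity :: "real \<Rightarrow> real \<Rightarrow> real" where
  "sigmoid_affinity x z =
     sqrt (sigmoid x) * sqrt (sigmoid z) + sqrt (1 - sigmoid x) * sqrt (1 - sigmoid z)"

lemma sigmoid_affinity_bounds: "0 \<le> sigmoid_affinity x z" "sigmoid_affinity x z \<le> 1"
proof -
  have s: "0 < sigmoid x" "sigmoid x < 1" "0 < sigmoid z" "sigmoid z < 1"
    by (simp_all add: sigmoid_pos sigmoid_less_1)
  then show "0 \<le> sigmoid_affinity x z" unfolding sigmoid_affinity_def by simp
  have "0 \<le> (sigmoid x - sigmoid z)\<^sup>2 / 4" by simp
  then show "sigmoid_affinity x z \<le> 1"
    using sq_diff_le_bernoulli_hellinger[of "sigmoid x" "sigmoid z"] s
    unfolding sigmoid_affinity_def by linarith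
qed

lemma one_minus_sigmoid_affinity_ge:
  assumes "\<bar>x\<bar> \<le> R" "\<bar>z\<bar> \<le> R"
  shows "exp (- 2 * R) / 64 * (x - z)\<^sup>2 \<le> 1 - sigmoid_affinity x z"
proof -
  have "(exp (- R) / 4 * \<bar>x - z\<bar>)\<^sup>2 \<le> \<bar>sigmoid x - sigmoid z\<bar>\<^sup>2"
    using abs_sigmoid_diff_ge[OF assms] by (intro power_mono) auto
  then have "exp (- 2 * R) / 16 * (x - z)\<^sup>2 \<le> (sigmoid x - sigmoid z)\<^sup>2"
    by (simp add: power_mult_distrib power_divide exp_double[symmetric] power2_abs)
  moreover have "(sigmoid x - sigmoid z)\<^sup>2 / 4 \<le> 1 - sigmoid_affinity x z"
    using sq_diff_le_bernoulli_hellinger[of "sigmoid x" "sigmoid z"] sigmoid_pos sigmoid_less_1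
    unfolding sigmoid_affinity_def by (simp add: less_imp_le)
  ultimately show ?thesis by simp
qed

section \<open>A change-of-measure inequality\<close>

text \<open>The summand of the relative entropy of unnormalised weights: for probability vectors \<open>p\<close>
  and \<open>m\<close>, \<open>\<Sum>a. kl_term (p a) (m a)\<close> is \<open>KL(p \<parallel> m)\<close>.\<close>

definition kl_term :: "real \<Rightarrow> real \<Rightarrow> real" where
  "kl_term p m = (if p = 0 then 0 else p * ln (p / m)) - p + m"

lemma sqrt_diff_sq_le_kl_term:
  assumes "0 \<le> p" "0 < m"
  shows "(sqrt m - sqrt p)\<^sup>2 \<le> kl_term p m"
proof (cases "p = 0")
  case False
  then have p: "0 < p" using assms by simp
  have "ln (m / p) \<le> 2 * sqrt (m / p) - 2" using p assms by (intro ln_le_two_sqrt_minus_two) simp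
  then have "2 - 2 * sqrt (m / p) \<le> ln (p / m)" using p assms by (simp add: ln_div)
  then have "p * (2 - 2 * sqrt (m / p)) \<le> p * ln (p / m)" using p by (intro mult_left_mono) auto
  moreover have "p * sqrt (m / p) = sqrt p * sqrt m"
    using p by (simp add: real_sqrt_divide field_simps)
  ultimately have "2 * p - 2 * (sqrt p * sqrt m) \<le> p * ln (p / m)" by (simp add: algebra_simps)
  moreover have "(sqrt m - sqrt p)\<^sup>2 = m + p - 2 * (sqrt p * sqrt m)"
    using p assms by (simp add: power2_diff algebra_simps)
  ultimately show ?thesis using False by (simp add: kl_term_def)
qed (use assms in \<open>simp add: kl_term_def\<close>)

lemma kl_term_nonneg: "0 \<le> p \<Longrightarrow> 0 < m \<Longrightarrow> 0 \<le> kl_term p m"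
  using sqrt_diff_sq_le_kl_term[of p m] zero_le_power2[of "sqrt m - sqrt p"] by linarith

lemma sq_div_le_kl_term:
  assumes "0 < p" "0 < m" "m \<le> 16 * p"
  shows "m\<^sup>2 / p \<le> 25 * kl_term p m + 2 * m"
proof -
  define u where "u = m / p"
  have u: "0 < u" "u \<le> 16" using assms by (auto simp: u_def field_simps)
  have "p * (u - 1)\<^sup>2 \<le> p * (25 * (u - 1 - ln u))"
    using sq_diff_one_le_ln_gap[OF u] assms by (intro mult_left_mono) auto
  then have "p * (u - 1)\<^sup>2 \<le> 25 * (p * (u - 1 - ln u))" by (simp add: mult.left_commute)
  moreover have "p * (u - 1)\<^sup>2 = m\<^sup>2 / p - 2 * m + p"
    using assms by (simp add: u_def field_simps power2_eq_square)
  moreover have "p * (u - 1 - ln u) = kl_term p m"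
    using assms by (simp add: u_def kl_term_def ln_div field_simps)
  ultimately show ?thesis using assms(1) by linarith
qed

lemma le_two_kl_term:
  assumes "0 \<le> p" "0 < m" "\<not> (0 < p \<and> m \<le> 16 * p)"
  shows "m \<le> 2 * kl_term p m"
proof (cases "p = 0")
  case False
  then have "sqrt (16 * p) < sqrt m" using assms by simp
  then have "3 / 4 * sqrt m \<le> sqrt m - sqrt p" by (simp add: real_sqrt_mult)
  then have "(3 / 4 * sqrt m)\<^sup>2 \<le> (sqrt m - sqrt p)\<^sup>2" using assms by (intro power_mono) auto
  moreover have "(3 / 4 * sqrt m)\<^sup>2 = 9 / 16 * m" using assms by (simp add: power_divide power_mult_distrib)
  ultimately have "9 / 16 * m \<le> (sqrt m - sqrt p)\<^sup>2" by simp
  then show ?thesis using sqrt_diff_sq_le_kl_term[OF assms(1,2)] assms by linarith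
qed (use assms in \<open>simp add: kl_term_def\<close>)

text \<open>On covered actions the ratio \<open>\<mu> / \<pi>\<close> is bounded and the change of measure from \<open>\<mu>\<close> to \<open>\<pi>\<close>
  is paid for by \<open>kl_term\<close>; on the others \<open>\<mu>\<close> itself is (\<open>le_two_kl_term\<close>), and only there
  is the density bound \<open>E\<close> of \<open>\<mu>\<close> with respect to \<open>\<nu>\<close> used.\<close>

locale coverage =
  fixes A :: "'a set" and \<pi> \<mu> \<nu> :: "'a \<Rightarrow> real" and E :: real
  assumes finite_A: "finite A"
    and pi_nonneg: "\<And>a. a \<in> A \<Longrightarrow> 0 \<le> \<pi> a" and sum_pi: "(\<Sum>a\<in>A. \<pi> a) = 1"
    and mu_pos: "\<And>a. a \<in> A \<Longrightarrow> 0 < \<mu> a" and sum_mu: "(\<Sum>a\<in>A. \<mu> a) = 1"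
    and nu_pos: "\<And>a. a \<in> A \<Longrightarrow> 0 < \<nu> a" and sum_nu: "(\<Sum>a\<in>A. \<nu> a) = 1"
    and mu_le: "\<And>a. a \<in> A \<Longrightarrow> \<mu> a \<le> E * \<nu> a" and E_ge_1: "1 \<le> E"
begin

definition covered :: "'a \<Rightarrow> bool" where
  "covered a \<longleftrightarrow> 0 < \<pi> a \<and> \<mu> a \<le> 16 * \<pi> a"

definition kl :: real where
  "kl = (\<Sum>a\<in>A. kl_term (\<pi> a) (\<mu> a))"

definition spread :: "('a \<Rightarrow> real) \<Rightarrow> real" where
  "spread g = (\<Sum>b\<in>A. \<Sum>c\<in>A. \<pi> b * \<nu> c * (g b - g c)\<^sup>2)"

definition abs_spread :: "('a \<Rightarrow> real) \<Rightarrow> real" where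
  "abs_spread g = (\<Sum>b\<in>A. \<Sum>c\<in>A. \<pi> b * \<nu> c * \<bar>g b - g c\<bar>)"

definition uncovered_mass :: real where
  "uncovered_mass = (\<Sum>a\<in>A. if covered a then 0 else \<mu> a)"

lemma kl_term_at_nonneg: "a \<in> A \<Longrightarrow> 0 \<le> kl_term (\<pi> a) (\<mu> a)"
  by (simp add: kl_term_nonneg pi_nonneg mu_pos)

lemma weight_nonneg: "b \<in> A \<Longrightarrow> c \<in> A \<Longrightarrow> 0 \<le> \<pi> b * \<nu> c"
  by (simp add: pi_nonneg nu_pos less_imp_le)

lemma sum_weights: "(\<Sum>b\<in>A. \<Sum>c\<in>A. \<pi> b * \<nu> c) = 1"
  by (simp add: sum_pi sum_nu flip: sum_distrib_left sum_distrib_right)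

lemma centred_eq: "g a - (\<Sum>c\<in>A. \<nu> c * g c) = (\<Sum>c\<in>A. \<nu> c * (g a - g c))"
  by (simp add: right_diff_distrib sum_subtractf sum_nu flip: sum_distrib_right)

lemma covered_action_le:
  assumes a: "a \<in> A" and cov: "covered a" and l: "0 < l"
  shows "\<mu> a * (g a - (\<Sum>c\<in>A. \<nu> c * g c))
    \<le> l / 2 * (25 * kl_term (\<pi> a) (\<mu> a) + 2 * \<mu> a) + 1 / (2 * l) * (\<Sum>c\<in>A. \<pi> a * \<nu> c * (g a - g c)\<^sup>2)"
proof -
  have pa: "0 < \<pi> a" using cov by (simp add: covered_def)
  have "\<mu> a * (g a - (\<Sum>c\<in>A. \<nu> c * g c)) = (\<Sum>c\<in>A. (\<pi> a * \<nu> c) * ((\<mu> a / \<pi> a) * (g a - g c)))"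
    using pa unfolding centred_eq sum_distrib_left by (intro sum.cong refl) (simp add: field_simps)
  also have "\<dots> \<le> (\<Sum>c\<in>A. (\<pi> a * \<nu> c) * (l / 2 * (\<mu> a / \<pi> a)\<^sup>2 + (g a - g c)\<^sup>2 / (2 * l)))"
    using a l by (intro sum_mono mult_left_mono young_mult_le weight_nonneg)
  also have "\<dots> = (\<Sum>c\<in>A. \<nu> c) * (\<pi> a * (l / 2 * (\<mu> a / \<pi> a)\<^sup>2))
      + (\<Sum>c\<in>A. \<pi> a * \<nu> c * (g a - g c)\<^sup>2) * (1 / (2 * l))"
    unfolding sum_distrib_right sum.distrib[symmetric] by (intro sum.cong refl) (simp add: field_simps)
  also have "\<dots> = l / 2 * ((\<mu> a)\<^sup>2 / \<pi> a) + 1 / (2 * l) * (\<Sum>c\<in>A. \<pi> a * \<nu> c * (g a - g c)\<^sup>2)"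
    using pa by (simp add: sum_nu power2_eq_square)
  also have "(\<mu> a)\<^sup>2 / \<pi> a \<le> 25 * kl_term (\<pi> a) (\<mu> a) + 2 * \<mu> a"
    using cov mu_pos[OF a] by (intro sq_div_le_kl_term) (auto simp: covered_def)
  finally show ?thesis using l by (simp add: mult_left_mono)
qed

lemma pairwise_diff_sum:
  "(\<Sum>b\<in>A. \<Sum>c\<in>A. \<pi> b * \<nu> c * (g b - g c)) = (\<Sum>b\<in>A. \<pi> b * g b) - (\<Sum>c\<in>A. \<nu> c * g c)"
proof -
  have "(\<Sum>c\<in>A. \<pi> b * \<nu> c * (g b - g c)) = \<pi> b * (g b - (\<Sum>c\<in>A. \<nu> c * g c))" for b
    by (simp add: centred_eq sum_distrib_left mult.assoc)
  then show ?thesis by (simp add: right_diff_distrib sum_subtractf sum_pi flip: sum_distrib_right)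
qed

lemma action_le_via_nu:
  assumes a: "a \<in> A" and l: "0 < l"
  shows "\<mu> a * (g a - (\<Sum>c\<in>A. \<nu> c * g c))
    \<le> \<mu> a * abs_spread g + l / 2 * ((\<mu> a)\<^sup>2 / \<nu> a) + 1 / (2 * l) * (\<Sum>b\<in>A. \<pi> b * \<nu> a * (g b - g a)\<^sup>2)"
proof -
  have "(\<pi> b * \<nu> a) * ((\<mu> a / \<nu> a) * (g a - g b)) = \<mu> a * (\<pi> b * g a - \<pi> b * g b)" for b
    using nu_pos[OF a] by (simp add: field_simps)
  then have "(\<Sum>b\<in>A. (\<pi> b * \<nu> a) * ((\<mu> a / \<nu> a) * (g a - g b))) = \<mu> a * (g a - (\<Sum>b\<in>A. \<pi> b * g b))"
    by (simp add: sum_distrib_left[symmetric] sum_subtractf sum_pi flip: sum_distrib_right)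
  then have "\<mu> a * (g a - (\<Sum>c\<in>A. \<nu> c * g c))
      = \<mu> a * (\<Sum>b\<in>A. \<Sum>c\<in>A. \<pi> b * \<nu> c * (g b - g c)) + (\<Sum>b\<in>A. (\<pi> b * \<nu> a) * ((\<mu> a / \<nu> a) * (g a - g b)))"
    unfolding pairwise_diff_sum by (simp add: right_diff_distrib)
  also have "\<dots> \<le> \<mu> a * abs_spread g + (\<Sum>b\<in>A. (\<pi> b * \<nu> a) * (l / 2 * (\<mu> a / \<nu> a)\<^sup>2 + (g b - g a)\<^sup>2 / (2 * l)))"
  proof (rule add_mono)
    have "(\<Sum>b\<in>A. \<Sum>c\<in>A. \<pi> b * \<nu> c * (g b - g c)) \<le> abs_spread g"
      unfolding abs_spread_def by (intro sum_mono mult_left_mono weight_nonneg) auto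
    then show "\<mu> a * (\<Sum>b\<in>A. \<Sum>c\<in>A. \<pi> b * \<nu> c * (g b - g c)) \<le> \<mu> a * abs_spread g"
      using mu_pos[OF a] by (simp add: mult_left_mono)
  next
    show "(\<Sum>b\<in>A. (\<pi> b * \<nu> a) * ((\<mu> a / \<nu> a) * (g a - g b)))
      \<le> (\<Sum>b\<in>A. (\<pi> b * \<nu> a) * (l / 2 * (\<mu> a / \<nu> a)\<^sup>2 + (g b - g a)\<^sup>2 / (2 * l)))"
    proof (rule sum_mono)
      fix b assume "b \<in> A"
      show "(\<pi> b * \<nu> a) * ((\<mu> a / \<nu> a) * (g a - g b))
        \<le> (\<pi> b * \<nu> a) * (l / 2 * (\<mu> a / \<nu> a)\<^sup>2 + (g b - g a)\<^sup>2 / (2 * l))"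
        using mult_left_mono[OF young_mult_le[OF l, of "\<mu> a / \<nu> a" "g a - g b"] weight_nonneg[OF \<open>b \<in> A\<close> a]]
        by (simp only: power2_commute[of "g a" "g b"])
    qed
  qed
  also have "(\<Sum>b\<in>A. (\<pi> b * \<nu> a) * (l / 2 * (\<mu> a / \<nu> a)\<^sup>2 + (g b - g a)\<^sup>2 / (2 * l)))
      = (\<Sum>b\<in>A. \<pi> b) * (\<nu> a * (l / 2 * (\<mu> a / \<nu> a)\<^sup>2)) + (\<Sum>b\<in>A. \<pi> b * \<nu> a * (g b - g a)\<^sup>2) * (1 / (2 * l))"
    unfolding sum_distrib_right sum.distrib[symmetric] by (intro sum.cong refl) (simp add: field_simps)
  also have "\<dots> = l / 2 * ((\<mu> a)\<^sup>2 / \<nu> a) + 1 / (2 * l) * (\<Sum>b\<in>A. \<pi> b * \<nu> a * (g b - g a)\<^sup>2)"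
    using nu_pos[OF a] by (simp add: sum_pi power2_eq_square)
  finally show ?thesis by simp
qed

lemma uncovered_action_le:
  assumes a: "a \<in> A" and uncov: "\<not> covered a" and l: "0 < l"
  shows "\<mu> a * (g a - (\<Sum>c\<in>A. \<nu> c * g c))
    \<le> \<mu> a * abs_spread g + l * E * kl_term (\<pi> a) (\<mu> a) + 1 / (2 * l) * (\<Sum>b\<in>A. \<pi> b * \<nu> a * (g b - g a)\<^sup>2)"
proof -
  have "(\<mu> a)\<^sup>2 / \<nu> a \<le> E * \<mu> a"
    using mu_le[OF a] nu_pos[OF a] mu_pos[OF a] by (simp add: power2_eq_square field_simps mult_left_mono)
  also have "E * \<mu> a \<le> E * (2 * kl_term (\<pi> a) (\<mu> a))"
    using le_two_kl_term[OF pi_nonneg[OF a] mu_pos[OF a]] uncov E_ge_1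
    by (intro mult_left_mono) (auto simp: covered_def)
  finally have "l / 2 * ((\<mu> a)\<^sup>2 / \<nu> a) \<le> l / 2 * (E * (2 * kl_term (\<pi> a) (\<mu> a)))"
    using l by (intro mult_left_mono) auto
  moreover have "l / 2 * (E * (2 * kl_term (\<pi> a) (\<mu> a))) = l * E * kl_term (\<pi> a) (\<mu> a)" by simp
  ultimately show ?thesis using action_le_via_nu[OF a l, of g] by linarith
qed

lemma action_le:
  assumes a: "a \<in> A" and l: "0 < l"
  shows "\<mu> a * (g a - (\<Sum>c\<in>A. \<nu> c * g c))
    \<le> l / 2 * ((25 + 2 * E) * kl_term (\<pi> a) (\<mu> a) + 2 * \<mu> a)
      + 1 / (2 * l) * ((\<Sum>c\<in>A. \<pi> a * \<nu> c * (g a - g c)\<^sup>2) + (\<Sum>b\<in>A. \<pi> b * \<nu> a * (g b - g a)\<^sup>2))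
      + (if covered a then 0 else \<mu> a) * abs_spread g"
proof -
  define \<psi> H1 H2 where "\<psi> = kl_term (\<pi> a) (\<mu> a)"
    and "H1 = (\<Sum>c\<in>A. \<pi> a * \<nu> c * (g a - g c)\<^sup>2)" and "H2 = (\<Sum>b\<in>A. \<pi> b * \<nu> a * (g b - g a)\<^sup>2)"
  have "0 \<le> H1" "0 \<le> H2"
    using a by (auto simp: H1_def H2_def intro!: sum_nonneg mult_nonneg_nonneg weight_nonneg)
  then have H: "1 / (2 * l) * H1 \<le> 1 / (2 * l) * (H1 + H2)" "1 / (2 * l) * H2 \<le> 1 / (2 * l) * (H1 + H2)"
    using l by (simp_all add: divide_right_mono)
  have "0 \<le> \<psi>" "0 < \<mu> a" using kl_term_at_nonneg[OF a] mu_pos[OF a] by (simp_all add: \<psi>_def)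
  then have k: "l / 2 * (25 * \<psi> + 2 * \<mu> a) \<le> l / 2 * ((25 + 2 * E) * \<psi> + 2 * \<mu> a)"
      "l * E * \<psi> \<le> l / 2 * ((25 + 2 * E) * \<psi> + 2 * \<mu> a)"
    using l E_ge_1 by (simp_all add: algebra_simps)
  show ?thesis
  proof (cases "covered a")
    case True
    then have "(if covered a then 0 else \<mu> a) * abs_spread g = 0" by simp
    then show ?thesis using covered_action_le[OF a True l, of g] k(1) H(1)
      unfolding \<psi>_def[symmetric] H1_def[symmetric] H2_def[symmetric] by linarith
  next
    case False
    then have "(if covered a then 0 else \<mu> a) * abs_spread g = \<mu> a * abs_spread g" by simp
    then show ?thesis using uncovered_action_le[OF a False l, of g] k(2) H(2)
      unfolding \<psi>_def[symmetric] H1_def[symmetric] H2_def[symmetric] by linarith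
  qed
qed

lemma uncovered_mass_bounds: "0 \<le> uncovered_mass" "uncovered_mass \<le> 1" "uncovered_mass \<le> 2 * kl"
proof -
  show "0 \<le> uncovered_mass" unfolding uncovered_mass_def
    by (intro sum_nonneg) (simp add: mu_pos less_imp_le)
  have "uncovered_mass \<le> (\<Sum>a\<in>A. \<mu> a)" unfolding uncovered_mass_def
    by (intro sum_mono) (simp add: mu_pos less_imp_le)
  then show "uncovered_mass \<le> 1" by (simp add: sum_mu)
  have "(if covered a then 0 else \<mu> a) \<le> 2 * kl_term (\<pi> a) (\<mu> a)" if "a \<in> A" for a
  proof (cases "covered a")
    case True
    then show ?thesis using kl_term_at_nonneg[OF that] by simp
  next
    case False
    then have "\<mu> a \<le> 2 * kl_term (\<pi> a) (\<mu> a)"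
      using le_two_kl_term[OF pi_nonneg[OF that] mu_pos[OF that]] by (simp add: covered_def)
    with False show ?thesis by simp
  qed
  then have "uncovered_mass \<le> (\<Sum>a\<in>A. 2 * kl_term (\<pi> a) (\<mu> a))"
    unfolding uncovered_mass_def by (rule sum_mono)
  then show "uncovered_mass \<le> 2 * kl" by (simp add: kl_def sum_distrib_left)
qed

lemma uncovered_mass_mult_le:
  assumes l: "0 < l"
  shows "uncovered_mass * abs_spread g \<le> l / 2 * uncovered_mass\<^sup>2 + spread g / (2 * l)"
proof -
  have "uncovered_mass * abs_spread g = (\<Sum>b\<in>A. \<Sum>c\<in>A. (\<pi> b * \<nu> c) * (uncovered_mass * \<bar>g b - g c\<bar>))"
    by (simp add: abs_spread_def sum_distrib_left ac_simps)
  also have "\<dots> \<le> (\<Sum>b\<in>A. \<Sum>c\<in>A. (\<pi> b * \<nu> c) * (l / 2 * uncovered_mass\<^sup>2 + \<bar>g b - g c\<bar>\<^sup>2 / (2 * l)))"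
    using l by (intro sum_mono mult_left_mono young_mult_le weight_nonneg)
  also have "\<dots> = (\<Sum>b\<in>A. \<Sum>c\<in>A. (\<pi> b * \<nu> c) * (l / 2 * uncovered_mass\<^sup>2))
      + (\<Sum>b\<in>A. \<Sum>c\<in>A. \<pi> b * \<nu> c * (g b - g c)\<^sup>2 / (2 * l))"
    by (simp add: distrib_left sum.distrib)
  also have "(\<Sum>b\<in>A. \<Sum>c\<in>A. (\<pi> b * \<nu> c) * (l / 2 * uncovered_mass\<^sup>2)) = l / 2 * uncovered_mass\<^sup>2"
    by (simp only: sum_distrib_right[symmetric] sum_weights mult_1_left)
  also have "(\<Sum>b\<in>A. \<Sum>c\<in>A. \<pi> b * \<nu> c * (g b - g c)\<^sup>2 / (2 * l)) = spread g / (2 * l)"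
    by (simp add: spread_def sum_divide_distrib)
  finally show ?thesis .
qed

lemma sum_action_bounds:
  "(\<Sum>a\<in>A. l / 2 * ((25 + 2 * E) * kl_term (\<pi> a) (\<mu> a) + 2 * \<mu> a)
      + 1 / (2 * l) * ((\<Sum>c\<in>A. \<pi> a * \<nu> c * (g a - g c)\<^sup>2) + (\<Sum>b\<in>A. \<pi> b * \<nu> a * (g b - g a)\<^sup>2))
      + (if covered a then 0 else \<mu> a) * abs_spread g)
    = l / 2 * ((25 + 2 * E) * kl + 2) + 1 / (2 * l) * (spread g + spread g) + uncovered_mass * abs_spread g"
proof -
  have "(\<Sum>a\<in>A. (25 + 2 * E) * kl_term (\<pi> a) (\<mu> a) + 2 * \<mu> a) = (25 + 2 * E) * kl + 2"
    by (simp add: kl_def sum.distrib sum_mu flip: sum_distrib_left)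
  then have "(\<Sum>a\<in>A. l / 2 * ((25 + 2 * E) * kl_term (\<pi> a) (\<mu> a) + 2 * \<mu> a)) = l / 2 * ((25 + 2 * E) * kl + 2)"
    unfolding sum_distrib_left[symmetric] by simp
  moreover have "(\<Sum>a\<in>A. \<Sum>b\<in>A. \<pi> b * \<nu> a * (g b - g a)\<^sup>2) = spread g"
    unfolding spread_def by (rule sum.swap)
  then have "(\<Sum>a\<in>A. 1 / (2 * l) * ((\<Sum>c\<in>A. \<pi> a * \<nu> c * (g a - g c)\<^sup>2) + (\<Sum>b\<in>A. \<pi> b * \<nu> a * (g b - g a)\<^sup>2)))
      = 1 / (2 * l) * (spread g + spread g)"
    unfolding sum_distrib_left[symmetric] sum.distrib by (simp add: spread_def)
  moreover have "(\<Sum>a\<in>A. (if covered a then 0 else \<mu> a) * abs_spread g) = uncovered_mass * abs_spread g"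
    by (simp add: uncovered_mass_def sum_distrib_right)
  ultimately show ?thesis by (simp add: sum.distrib)
qed

theorem coverage_le:
  assumes l: "0 < l"
  shows "(\<Sum>a\<in>A. \<mu> a * g a) - (\<Sum>a\<in>A. \<nu> a * g a) \<le> l * (1 + 15 * E * kl) + 3 / (2 * l) * spread g"
proof -
  define M where "M = uncovered_mass"
  have "(\<Sum>a\<in>A. \<mu> a * g a) - (\<Sum>a\<in>A. \<nu> a * g a) = (\<Sum>a\<in>A. \<mu> a * (g a - (\<Sum>c\<in>A. \<nu> c * g c)))"
    by (simp add: right_diff_distrib sum_subtractf sum_mu flip: sum_distrib_right)
  also have "\<dots> \<le> l / 2 * ((25 + 2 * E) * kl + 2) + 1 / (2 * l) * (spread g + spread g) + M * abs_spread g"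
    unfolding M_def sum_action_bounds[symmetric] by (intro sum_mono action_le l)
  also have "\<dots> \<le> l / 2 * ((25 + 2 * E) * kl + 2) + 1 / (2 * l) * (spread g + spread g)
      + (l / 2 * M\<^sup>2 + spread g / (2 * l))"
    using uncovered_mass_mult_le[OF l, of g] unfolding M_def by linarith
  also have "\<dots> \<le> l * (1 + 15 * E * kl) + 3 / (2 * l) * spread g"
  proof -
    define x y where "x = l * kl" and "y = l * E * kl"
    have "M * M \<le> M * 1" using uncovered_mass_bounds(1,2) by (intro mult_left_mono) (auto simp: M_def)
    then have "M\<^sup>2 \<le> 2 * kl" using uncovered_mass_bounds(3) by (simp add: M_def power2_eq_square)
    then have "l / 2 * M\<^sup>2 \<le> x" using l by (simp add: x_def mult_left_mono)
    moreover have "0 \<le> x" "x \<le> y"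
      using l E_ge_1 uncovered_mass_bounds(1,3) by (simp_all add: x_def y_def mult_right_mono)
    moreover have "l / 2 * ((25 + 2 * E) * kl + 2) = l + 25 / 2 * x + y"
      by (simp add: x_def y_def algebra_simps)
    moreover have "l * (1 + 15 * E * kl) = l + 15 * y" by (simp add: y_def algebra_simps)
    moreover have "1 / (2 * l) * (spread g + spread g) + spread g / (2 * l) = 3 / (2 * l) * spread g"
      by (simp add: field_simps)
    ultimately show ?thesis by linarith
  qed
  finally show ?thesis .
qed

end

lemma is_policy_nonneg: "is_policy A p \<Longrightarrow> 0 \<le> p s a"
  by (simp add: is_policy_def)

lemma is_policy_sum: "is_policy A p \<Longrightarrow> (\<Sum>a\<in>A. p s a) = 1"
  by (simp add: is_policy_def)

lemma policy_value_bounds: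
  assumes "is_policy A p" and "\<And>s a. a \<in> A \<Longrightarrow> 0 \<le> r s a \<and> r s a \<le> R"
  shows "0 \<le> (\<Sum>a\<in>A. p s a * r s a)" "(\<Sum>a\<in>A. p s a * r s a) \<le> R"
proof -
  show "0 \<le> (\<Sum>a\<in>A. p s a * r s a)"
    using assms is_policy_nonneg[OF assms(1)] by (intro sum_nonneg) auto
  have "(\<Sum>a\<in>A. p s a * r s a) \<le> (\<Sum>a\<in>A. p s a * R)"
    using assms is_policy_nonneg[OF assms(1)] by (intro sum_mono mult_left_mono) auto
  then show "(\<Sum>a\<in>A. p s a * r s a) \<le> R" by (simp add: is_policy_sum[OF assms(1)] flip: sum_distrib_right)
qed

lemma integrable_measure_pmf_bounded:
  fixes f :: "'b \<Rightarrow> real"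
  assumes "\<And>x. \<bar>f x\<bar> \<le> B"
  shows "integrable (measure_pmf M) f"
  by (intro measure_pmf.integrable_const_bound[where B = B]) (auto simp: assms)

lemma expectation_bind_pmf_bounded:
  fixes f :: "'b \<Rightarrow> real"
  assumes "\<And>x. \<bar>f x\<bar> \<le> B"
  shows "measure_pmf.expectation (bind_pmf M N) f
    = measure_pmf.expectation M (\<lambda>x. measure_pmf.expectation (N x) f)"
  using measurable_measure_pmf[of N] unfolding measure_pmf_bind
  by (subst integral_bind[where K = "count_space UNIV" and B = B and B' = 1])
    (use assms in \<open>auto simp: prob_space.emeasure_space_1 prob_space_measure_pmf
      prob_space.finite_measure[OF prob_space_measure_pmf]\<close>)

lemma pmf_and_set_pol_pmf:
  assumes "is_policy A p" "finite A"
  shows "pmf (pol_pmf p s) a = p s a" "set_pmf (pol_pmf p s) \<subseteq> A"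
proof -
  have nn: "\<And>x. 0 \<le> p s x" using assms by (simp add: is_policy_def)
  have "(\<integral>\<^sup>+x. ennreal (p s x) \<partial>count_space UNIV) = (\<Sum>x\<in>A. ennreal (p s x))"
    using assms by (intro nn_integral_count_space') (auto simp: is_policy_def)
  also have "\<dots> = 1" using assms nn by (simp add: is_policy_def)
  finally have one: "(\<integral>\<^sup>+x. ennreal (p s x) \<partial>count_space UNIV) = 1" .
  show "pmf (pol_pmf p s) a = p s a" unfolding pol_pmf_def
    by (rule pmf_embed_pmf) (use nn one in auto)
  show "set_pmf (pol_pmf p s) \<subseteq> A" unfolding pol_pmf_def
    using set_embed_pmf[of "\<lambda>a. p s a"] nn one assms by (auto simp: is_policy_def)
qed

lemma expectation_pol_pmf:
  assumes "is_policy A p" "finite A"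
  shows "measure_pmf.expectation (pol_pmf p s) f = (\<Sum>a\<in>A. p s a * f a)"
  using integral_measure_pmf[OF assms(2), of "pol_pmf p s" f] pmf_and_set_pol_pmf[OF assms] by auto

section \<open>The KL-regularised objective\<close>

locale rpo_setting =
  fixes A :: "'a set" and \<rho> :: "'s pmf" and pref :: "'s \<Rightarrow> 'a \<Rightarrow> real" and \<beta> R :: real
    and rstar :: "'s \<Rightarrow> 'a \<Rightarrow> real" and P :: "('s \<Rightarrow> 'a \<Rightarrow> real) set"
  assumes finite_A: "finite A" and A_nonempty: "A \<noteq> {}"
    and policy_pref: "is_policy A pref" and pref_pos: "\<And>s a. a \<in> A \<Longrightarrow> 0 < pref s a"
    and beta_pos: "0 < \<beta>" and R_pos: "0 < R"
    and rstar_range: "\<And>s a. a \<in> A \<Longrightarrow> 0 \<le> rstar s a \<and> rstar s a \<le> R"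
    and finite_P: "finite P" and policy_P: "\<And>p. p \<in> P \<Longrightarrow> is_policy A p"
    and opt_in_P: "pi_star A pref \<beta> rstar \<in> P"
    and log_ratio_le: "\<And>p s a. p \<in> P \<Longrightarrow> a \<in> A \<Longrightarrow> \<bar>ln (p s a / pref s a)\<bar> \<le> R / \<beta>"
begin

abbreviation opt :: "'s \<Rightarrow> 'a \<Rightarrow> real" where
  "opt \<equiv> pi_star A pref \<beta> rstar"

abbreviation J :: "('s \<Rightarrow> 'a \<Rightarrow> real) \<Rightarrow> real" where
  "J \<equiv> J_beta \<rho> A pref \<beta> rstar"

abbreviation E\<rho> :: "('s \<Rightarrow> real) \<Rightarrow> real" where
  "E\<rho> \<equiv> measure_pmf.expectation \<rho>"

definition partition :: "'s \<Rightarrow> real" where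
  "partition s = (\<Sum>b\<in>A. pref s b * exp (rstar s b / \<beta>))"

lemma partition_bounds: "1 \<le> partition s" "partition s \<le> exp (R / \<beta>)"
proof -
  have "(\<Sum>b\<in>A. pref s b * 1) \<le> partition s" unfolding partition_def
    using pref_pos rstar_range beta_pos by (intro sum_mono mult_left_mono) (auto simp: less_imp_le)
  then show "1 \<le> partition s" by (simp add: is_policy_sum[OF policy_pref])
  have "partition s \<le> (\<Sum>b\<in>A. pref s b * exp (R / \<beta>))" unfolding partition_def
    using pref_pos rstar_range beta_pos
    by (intro sum_mono mult_left_mono) (auto simp: less_imp_le divide_right_mono)
  then show "partition s \<le> exp (R / \<beta>)" by (simp add: is_policy_sum[OF policy_pref] flip: sum_distrib_right)
qed

lemma partition_pos: "0 < partition s"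
  using partition_bounds(1)[of s] by simp

lemma ln_partition_bounds: "0 \<le> ln (partition s)" "ln (partition s) \<le> R / \<beta>"
  using partition_bounds[of s] partition_pos[of s] ln_mono[OF partition_bounds(2) partition_pos, of s] by auto

lemma beta_ln_partition_bounds: "0 \<le> \<beta> * ln (partition s)" "\<beta> * ln (partition s) \<le> R"
  using ln_partition_bounds[of s] beta_pos by (simp_all add: pos_le_divide_eq mult.commute)

lemma opt_eq: "a \<in> A \<Longrightarrow> opt s a = pref s a * exp (rstar s a / \<beta>) / partition s"
  by (simp add: pi_star_def partition_def)

lemma opt_pos: "a \<in> A \<Longrightarrow> 0 < opt s a"
  using partition_pos[of s] pref_pos by (simp add: opt_eq)

lemma opt_sum: "(\<Sum>a\<in>A. opt s a) = 1"
  using partition_pos[of s] by (simp add: opt_eq sum_divide_distrib[symmetric] partition_def)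

lemma policy_opt: "is_policy A opt"
  unfolding is_policy_def using opt_pos opt_sum
  by (auto simp: pi_star_def intro: less_imp_le)

lemma opt_le: "a \<in> A \<Longrightarrow> opt s a \<le> exp (R / \<beta>) * pref s a"
proof -
  assume a: "a \<in> A"
  have "opt s a \<le> pref s a * exp (rstar s a / \<beta>)"
    using partition_bounds(1)[of s] pref_pos[OF a, of s] a
    by (simp add: opt_eq divide_le_eq less_imp_le mult_le_cancel_left1 mult.commute)
  also have "\<dots> \<le> pref s a * exp (R / \<beta>)" using rstar_range[OF a] pref_pos[OF a, of s] beta_pos
    by (intro mult_left_mono) (auto simp: divide_right_mono less_imp_le)
  finally show ?thesis by (simp add: mult.commute)
qed

lemma ln_opt_div_pref: "a \<in> A \<Longrightarrow> ln (opt s a / pref s a) = rstar s a / \<beta> - ln (partition s)"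
  using pref_pos[of a s] partition_pos[of s] by (simp add: opt_eq ln_div)

lemma conv_polE:
  assumes "p \<in> conv_pol P"
  obtains F w where "finite F" "F \<subseteq> P" "\<forall>q\<in>F. 0 \<le> w q" "(\<Sum>q\<in>F. w q) = 1"
    "p = (\<lambda>s a. \<Sum>q\<in>F. w q * q s a)"
  using assms unfolding conv_pol_def by blast

lemma opt_in_conv_pol: "opt \<in> conv_pol P"
  unfolding conv_pol_def using opt_in_P by (intro CollectI exI[of _ "{opt}"] exI[of _ "\<lambda>_. 1"]) auto

lemma policy_conv_pol:
  assumes "p \<in> conv_pol P"
  shows "is_policy A p"
proof -
  obtain F w where F: "finite F" "F \<subseteq> P" "\<forall>q\<in>F. 0 \<le> w q" "(\<Sum>q\<in>F. w q) = 1"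
    and p: "p = (\<lambda>s a. \<Sum>q\<in>F. w q * q s a)" using conv_polE[OF assms] by blast
  have q: "is_policy A q" if "q \<in> F" for q using F that policy_P by auto
  have "(\<Sum>a\<in>A. p s a) = (\<Sum>q\<in>F. w q * (\<Sum>a\<in>A. q s a))" for s
    unfolding p by (simp add: sum_distrib_left) (rule sum.swap)
  then show ?thesis unfolding is_policy_def using F q
    by (auto simp: p is_policy_def intro!: sum_nonneg sum.neutral)
qed

lemma conv_pol_le:
  assumes "p \<in> conv_pol P" "a \<in> A"
  shows "p s a \<le> exp (R / \<beta>) * pref s a"
proof -
  have le: "q s a \<le> exp (R / \<beta>) * pref s a" if "q \<in> P" for q
  proof (cases "q s a = 0")
    case False
    then have "0 < q s a" using is_policy_nonneg[OF policy_P[OF that]] by (simp add: less_le)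
    moreover have "ln (q s a / pref s a) \<le> R / \<beta>" using log_ratio_le[OF that assms(2), of s] by simp
    ultimately have "q s a / pref s a \<le> exp (R / \<beta>)"
      using pref_pos[OF assms(2), of s] by (metis divide_pos_pos exp_le_cancel_iff exp_ln)
    then show ?thesis using pref_pos[OF assms(2), of s] by (simp add: divide_le_eq mult.commute)
  qed (use pref_pos[OF assms(2), of s] in \<open>simp add: less_imp_le\<close>)
  obtain F w where F: "finite F" "F \<subseteq> P" "\<forall>q\<in>F. 0 \<le> w q" "(\<Sum>q\<in>F. w q) = 1"
    and p: "p = (\<lambda>s a. \<Sum>q\<in>F. w q * q s a)" using conv_polE[OF assms(1)] by blast
  have "p s a \<le> (\<Sum>q\<in>F. w q * (exp (R / \<beta>) * pref s a))"
    unfolding p using F le by (intro sum_mono mult_left_mono) auto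
  also have "\<dots> = exp (R / \<beta>) * pref s a" using F by (simp flip: sum_distrib_right)
  finally show ?thesis .
qed

lemma regularised_value_eq:
  assumes "is_policy A p"
  shows "(\<Sum>a\<in>A. p s a * rstar s a) - \<beta> * KL_s A p pref s = \<beta> * ln (partition s) - \<beta> * KL_s A p opt s"
proof -
  have summand: "\<beta> * (if p s a = 0 then 0 else p s a * ln (p s a / pref s a))
      = \<beta> * (if p s a = 0 then 0 else p s a * ln (p s a / opt s a)) + p s a * rstar s a
        - \<beta> * ln (partition s) * p s a"
    if a: "a \<in> A" for a
  proof (cases "p s a = 0")
    case False
    then have "0 < p s a" using is_policy_nonneg[OF assms, of s a] by simp
    then have "ln (p s a / pref s a) = ln (p s a / opt s a) + ln (opt s a / pref s a)"
      using pref_pos[OF a, of s] opt_pos[OF a, of s] by (simp add: ln_div)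
    then have ln_eq: "ln (p s a / pref s a) = ln (p s a / opt s a) + rstar s a / \<beta> - ln (partition s)"
      by (simp add: ln_opt_div_pref[OF a])
    have "\<beta> * (p s a * ln (p s a / pref s a))
        = \<beta> * (p s a * ln (p s a / opt s a)) + p s a * rstar s a - \<beta> * ln (partition s) * p s a"
      unfolding ln_eq using beta_pos by (simp add: field_simps)
    then show ?thesis using False by simp
  qed simp
  have "\<beta> * KL_s A p pref s = (\<Sum>a\<in>A. \<beta> * (if p s a = 0 then 0 else p s a * ln (p s a / pref s a)))"
    by (simp add: KL_s_def sum_distrib_left)
  also have "\<dots> = \<beta> * KL_s A p opt s + (\<Sum>a\<in>A. p s a * rstar s a) - \<beta> * ln (partition s) * (\<Sum>a\<in>A. p s a)"
    by (simp add: summand KL_s_def sum.distrib sum_subtractf sum_distrib_left)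
  finally show ?thesis using is_policy_sum[OF assms] by simp
qed

lemma KL_pref_bounds:
  assumes "p \<in> conv_pol P"
  shows "0 \<le> KL_s A p pref s" "KL_s A p pref s \<le> R / \<beta>"
proof -
  have pol: "is_policy A p" by (rule policy_conv_pol[OF assms])
  have up: "(if p s a = 0 then 0 else p s a * ln (p s a / pref s a)) \<le> p s a * (R / \<beta>)"
    and lo: "p s a - pref s a \<le> (if p s a = 0 then 0 else p s a * ln (p s a / pref s a))"
    if a: "a \<in> A" for a
  proof -
    have pref: "0 < pref s a" by (rule pref_pos[OF a])
    show "(if p s a = 0 then 0 else p s a * ln (p s a / pref s a)) \<le> p s a * (R / \<beta>)"
    proof (cases "p s a = 0")
      case False
      then have pp: "0 < p s a" using is_policy_nonneg[OF pol, of s a] by simp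
      have "ln (p s a / pref s a) \<le> ln (exp (R / \<beta>))"
        using conv_pol_le[OF assms a, of s] pp pref by (intro ln_mono) (auto simp: divide_le_eq mult.commute)
      then have "p s a * ln (p s a / pref s a) \<le> p s a * (R / \<beta>)" using pp by (intro mult_left_mono) auto
      then show ?thesis using False by simp
    qed (use beta_pos R_pos in simp)
    show "p s a - pref s a \<le> (if p s a = 0 then 0 else p s a * ln (p s a / pref s a))"
    proof (cases "p s a = 0")
      case False
      then have pp: "0 < p s a" using is_policy_nonneg[OF pol, of s a] by simp
      have "ln (pref s a / p s a) \<le> pref s a / p s a - 1" using pp pref by (intro ln_le_minus_one) simp
      then have "p s a * (1 - pref s a / p s a) \<le> p s a * ln (p s a / pref s a)"
        using pp pref by (intro mult_left_mono) (auto simp: ln_div)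
      moreover have "p s a * (1 - pref s a / p s a) = p s a - pref s a" using pp by (simp add: field_simps)
      ultimately show ?thesis using False by simp
    qed (use pref in simp)
  qed
  have "KL_s A p pref s \<le> (\<Sum>a\<in>A. p s a * (R / \<beta>))" unfolding KL_s_def using up by (rule sum_mono)
  then show "KL_s A p pref s \<le> R / \<beta>"
    by (simp only: sum_distrib_right[symmetric] is_policy_sum[OF pol] mult_1_left)
  have "(\<Sum>a\<in>A. p s a - pref s a) \<le> KL_s A p pref s" unfolding KL_s_def using lo by (rule sum_mono)
  then show "0 \<le> KL_s A p pref s" by (simp add: sum_subtractf is_policy_sum[OF pol] is_policy_sum[OF policy_pref])
qed

lemma KL_opt_eq: "is_policy A p \<Longrightarrow> KL_s A p opt s = (\<Sum>a\<in>A. kl_term (p s a) (opt s a))"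
  by (simp add: KL_s_def kl_term_def sum.distrib sum_subtractf is_policy_sum opt_sum)

lemma KL_opt_nonneg: "is_policy A p \<Longrightarrow> 0 \<le> KL_s A p opt s"
  by (simp add: KL_opt_eq sum_nonneg kl_term_nonneg is_policy_nonneg opt_pos)

lemma abs_KL_opt_le:
  assumes "p \<in> conv_pol P"
  shows "\<bar>KL_s A p opt s\<bar> \<le> 3 * R / \<beta>"
proof -
  have pol: "is_policy A p" by (rule policy_conv_pol[OF assms])
  have "\<beta> * KL_s A p pref s \<le> R" "0 \<le> \<beta> * KL_s A p pref s"
    using KL_pref_bounds[OF assms, of s] beta_pos by (simp_all add: pos_le_divide_eq mult.commute)
  then have "\<bar>\<beta> * KL_s A p opt s\<bar> \<le> 3 * R"
    using regularised_value_eq[OF pol, of s] policy_value_bounds[where r = rstar and s = s, OF pol rstar_range]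
      beta_ln_partition_bounds[of s] by linarith
  then show ?thesis using beta_pos by (simp add: field_simps abs_mult)
qed

lemma KL_opt_self: "KL_s A opt opt s = 0"
  unfolding KL_s_def using opt_pos by (intro sum.neutral) auto

lemma J_opt_minus_J:
  assumes "p \<in> conv_pol P"
  shows "J opt - J p = \<beta> * E\<rho> (\<lambda>s. KL_s A p opt s)"
proof -
  have "J p = E\<rho> (\<lambda>s. \<beta> * ln (partition s) - \<beta> * KL_s A p opt s)"
    unfolding J_beta_def using regularised_value_eq[OF policy_conv_pol[OF assms]] by simp
  moreover have "J opt = E\<rho> (\<lambda>s. \<beta> * ln (partition s))"
    unfolding J_beta_def using regularised_value_eq[OF policy_opt] KL_opt_self by simp
  moreover have "integrable \<rho> (\<lambda>s. \<beta> * ln (partition s))"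
    using beta_ln_partition_bounds by (intro integrable_measure_pmf_bounded[where B = R]) simp
  moreover have "integrable \<rho> (\<lambda>s. KL_s A p opt s)"
    by (rule integrable_measure_pmf_bounded) (rule abs_KL_opt_le[OF assms])
  ultimately show ?thesis by simp
qed

section \<open>The RPO step\<close>

abbreviation rewards :: "('s \<Rightarrow> 'a \<Rightarrow> real) set" where
  "rewards \<equiv> reward_class A pref \<beta> R P"

abbreviation ropt :: "'s \<Rightarrow> 'a \<Rightarrow> real" where
  "ropt \<equiv> reward_of A pref \<beta> R opt"

lemma rewards_range: "r \<in> rewards \<Longrightarrow> 0 \<le> r s a \<and> r s a \<le> R"
  using R_pos by (auto simp: reward_class_def reward_of_def)

lemma ropt_in_rewards: "ropt \<in> rewards"
  using opt_in_P by (simp add: reward_class_def)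

lemma finite_rewards: "finite rewards" "rewards \<noteq> {}" "card rewards \<le> card P"
  using finite_P opt_in_P by (auto simp: reward_class_def card_image_le)

lemma ropt_eq:
  assumes a: "a \<in> A"
  shows "ropt s a = rstar s a - Min (rstar s ` A)"
proof -
  have "(\<lambda>a'. \<beta> * ln (opt s a' / pref s a')) ` A = (\<lambda>a'. rstar s a' + (- \<beta> * ln (partition s))) ` A"
    using beta_pos by (intro image_cong refl) (simp add: ln_opt_div_pref field_simps)
  then have "Min ((\<lambda>a'. \<beta> * ln (opt s a' / pref s a')) ` A) = Min (rstar s ` A) - \<beta> * ln (partition s)"
    using Min_add_commute[OF finite_A A_nonempty, of "rstar s" "- \<beta> * ln (partition s)"] by simp
  moreover have "\<beta> * ln (opt s a / pref s a) = rstar s a - \<beta> * ln (partition s)"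
    using beta_pos a by (simp add: ln_opt_div_pref field_simps)
  moreover have "Min (rstar s ` A) \<le> rstar s a" using finite_A a by (intro Min_le) auto
  moreover have "0 \<le> Min (rstar s ` A)" using finite_A A_nonempty rstar_range by (subst Min_ge_iff) auto
  ultimately show ?thesis using rstar_range[OF a, of s] by (simp add: reward_of_def)
qed

definition advantage :: "('s \<Rightarrow> 'a \<Rightarrow> real) \<Rightarrow> ('s \<Rightarrow> 'a \<Rightarrow> real) \<Rightarrow> 's \<Rightarrow> real" where
  "advantage r p s = (\<Sum>a\<in>A. p s a * r s a) - (\<Sum>a\<in>A. pref s a * r s a)"

lemma abs_advantage_le:
  assumes "is_policy A p" "\<And>s a. a \<in> A \<Longrightarrow> 0 \<le> r s a \<and> r s a \<le> R"
  shows "\<bar>advantage r p s\<bar> \<le> R"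
  using policy_value_bounds[where r = r and s = s, OF assms]
    policy_value_bounds[where r = r and s = s, OF policy_pref assms(2)]
  by (simp add: advantage_def)

lemma integrable_advantage:
  assumes "is_policy A p" "\<And>s a. a \<in> A \<Longrightarrow> 0 \<le> r s a \<and> r s a \<le> R"
  shows "integrable \<rho> (advantage r p)"
  using abs_advantage_le[OF assms] by (rule integrable_measure_pmf_bounded)

lemma advantage_ropt: "is_policy A p \<Longrightarrow> advantage ropt p s = advantage rstar p s"
  by (simp add: advantage_def ropt_eq right_diff_distrib sum_subtractf is_policy_sum policy_pref
      flip: sum_distrib_right cong: sum.cong)

lemma J_eq_advantage:
  assumes "p \<in> conv_pol P"
  shows "J p = E\<rho> (advantage rstar p) + E\<rho> (\<lambda>s. \<Sum>a\<in>A. pref s a * rstar s a) - \<beta> * KL_pol \<rho> A p pref"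
proof -
  have "J p = E\<rho> (\<lambda>s. advantage rstar p s + (\<Sum>a\<in>A. pref s a * rstar s a) - \<beta> * KL_s A p pref s)"
    by (simp add: J_beta_def advantage_def)
  moreover have "integrable \<rho> (advantage rstar p)"
    using policy_conv_pol[OF assms] rstar_range by (rule integrable_advantage)
  moreover have "integrable \<rho> (\<lambda>s. \<Sum>a\<in>A. pref s a * rstar s a)"
    using policy_value_bounds[where r = rstar, OF policy_pref rstar_range]
    by (intro integrable_measure_pmf_bounded[where B = R]) (simp add: abs_le_iff)
  moreover have "integrable \<rho> (\<lambda>s. KL_s A p pref s)"
    using KL_pref_bounds[OF assms]
    by (intro integrable_measure_pmf_bounded[where B = "R / \<beta>"]) (simp add: abs_le_iff)
  ultimately show ?thesis by (simp add: KL_pol_def)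
qed

definition advantage_gap :: "('s \<Rightarrow> 'a \<Rightarrow> real) \<Rightarrow> 's \<Rightarrow> real" where
  "advantage_gap r s = advantage rstar opt s - advantage r opt s"

lemma abs_advantage_gap_le:
  assumes "r \<in> rewards"
  shows "\<bar>advantage_gap r s\<bar> \<le> 2 * R"
  using abs_advantage_le[where r = rstar and s = s, OF policy_opt rstar_range]
    abs_advantage_le[where r = r and s = s, OF policy_opt rewards_range[OF assms]]
  by (simp add: advantage_gap_def)

text \<open>Comparing the max-min value of \<open>p\<close> with that of \<open>opt\<close>, tested against \<open>ropt\<close> and against the
  minimising reward \<open>r\<close> of \<open>opt\<close>.\<close>

lemma J_gap_le_of_RPO_solution:
  assumes "p \<in> RPO_solutions \<rho> A pref \<beta> (conv_pol P) rewards D \<eta>"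
  obtains r where "r \<in> rewards"
    "J opt - J p \<le> E\<rho> (advantage_gap r) - (L_D D r - L_D D ropt) / \<eta>"
proof -
  let ?obj = "rpo_obj \<rho> A pref \<beta> \<eta> D"
  have p: "p \<in> conv_pol P" and le: "(INF r\<in>rewards. ?obj opt r) \<le> (INF r\<in>rewards. ?obj p r)"
    using assms opt_in_conv_pol by (auto simp: RPO_solutions_def)
  obtain r where r: "r \<in> rewards" and r_min: "(INF r\<in>rewards. ?obj opt r) = ?obj opt r"
  proof -
    have "Inf (?obj opt ` rewards) = Min (?obj opt ` rewards)"
      using finite_rewards by (intro cInf_eq_Min) auto
    moreover have "Min (?obj opt ` rewards) \<in> ?obj opt ` rewards"
      using finite_rewards by (intro Min_in) auto
    ultimately show ?thesis using that by auto
  qed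
  have "(INF r\<in>rewards. ?obj p r) \<le> ?obj p ropt"
    using finite_rewards ropt_in_rewards by (intro cINF_lower) (auto intro: bdd_below_finite)
  then have "?obj opt r \<le> ?obj p ropt" using le r_min by simp
  then have "E\<rho> (advantage r opt) - \<beta> * KL_pol \<rho> A opt pref + L_D D r / \<eta>
      \<le> E\<rho> (advantage rstar p) - \<beta> * KL_pol \<rho> A p pref + L_D D ropt / \<eta>"
    using advantage_ropt[OF policy_conv_pol[OF p]] by (simp add: rpo_obj_def advantage_def[symmetric])
  moreover have "E\<rho> (advantage_gap r) = E\<rho> (advantage rstar opt) - E\<rho> (advantage r opt)"
    unfolding advantage_gap_def
    by (intro Bochner_Integration.integral_diff integrable_advantage policy_opt rstar_range
        rewards_range[OF r])
  ultimately have "J opt - J p \<le> E\<rho> (advantage_gap r) - (L_D D r - L_D D ropt) / \<eta>"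
    using J_eq_advantage[OF p] J_eq_advantage[OF opt_in_conv_pol] by (simp add: diff_divide_distrib)
  with r show ?thesis by (rule that)
qed

section \<open>Preference data\<close>

definition sample_step :: "(('s \<times> 'a \<times> 'a \<times> bool) list \<Rightarrow> ('s \<Rightarrow> 'a \<Rightarrow> real))
    \<Rightarrow> ('s \<times> 'a \<times> 'a \<times> bool) list \<Rightarrow> ('s \<times> 'a \<times> 'a \<times> bool) pmf" where
  "sample_step alg h = bind_pmf \<rho> (\<lambda>s. bind_pmf (pol_pmf (alg h) s) (\<lambda>a. bind_pmf (pol_pmf pref s) (\<lambda>a'.
      map_pmf (\<lambda>y. (s, a, a', y)) (bernoulli_pmf (sigmoid (rstar s a - rstar s a'))))))"

lemma gen_data_Suc:
  "gen_data \<rho> alg pref rstar (Suc n)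
    = bind_pmf (gen_data \<rho> alg pref rstar n) (\<lambda>h. map_pmf (\<lambda>d. h @ [d]) (sample_step alg h))"
  by (simp add: sample_step_def map_bind_pmf map_pmf_comp o_def)

lemma length_gen_data: "h \<in> set_pmf (gen_data \<rho> alg pref rstar n) \<Longrightarrow> length h = n"
  by (induction n arbitrary: h) (auto simp: gen_data_Suc)

lemma expectation_sample_step:
  fixes f :: "'s \<times> 'a \<times> 'a \<times> bool \<Rightarrow> real"
  assumes pol: "is_policy A (alg h)" and bdd: "\<And>d. \<bar>f d\<bar> \<le> B"
  shows "measure_pmf.expectation (sample_step alg h) f = E\<rho> (\<lambda>s.
     \<Sum>a\<in>A. alg h s a * (\<Sum>a'\<in>A. pref s a' * (f (s, a, a', True) * sigmoid (rstar s a - rstar s a')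
        + f (s, a, a', False) * (1 - sigmoid (rstar s a - rstar s a')))))"
  unfolding sample_step_def expectation_bind_pmf_bounded[OF bdd]
  using sigmoid_pos sigmoid_less_1
  by (simp add: expectation_bind_pmf_bounded[OF bdd] expectation_pol_pmf[OF pol finite_A]
      expectation_pol_pmf[OF policy_pref finite_A] less_imp_le)

definition excess_loss :: "('s \<Rightarrow> 'a \<Rightarrow> real) \<Rightarrow> 's \<times> 'a \<times> 'a \<times> bool \<Rightarrow> real" where
  "excess_loss r d = bt_loss r d - bt_loss ropt d"

lemma abs_excess_loss_le: "r \<in> rewards \<Longrightarrow> \<bar>excess_loss r d\<bar> \<le> 1 + R"
  using bt_loss_bounds[of r R d] bt_loss_bounds[of ropt R d] rewards_range ropt_in_rewards
  by (auto simp: excess_loss_def abs_le_iff)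

lemma sum_excess_loss: "0 < length h \<Longrightarrow> (\<Sum>i<length h. excess_loss r (h ! i)) = length h * (L_D h r - L_D h ropt)"
  by (simp add: excess_loss_def L_D_def sum_subtractf right_diff_distrib)

text \<open>\<open>exp (- excess_loss r d / 2)\<close> is the square root of the likelihood ratio of the label under \<open>r\<close>
  against \<open>ropt\<close> (equivalently \<open>rstar\<close>); its conditional mean is the Bhattacharyya affinity of the two
  label distributions, and \<open>1 - affinity\<close> their squared Hellinger distance.\<close>

definition affinity :: "(('s \<times> 'a \<times> 'a \<times> bool) list \<Rightarrow> ('s \<Rightarrow> 'a \<Rightarrow> real))
    \<Rightarrow> ('s \<Rightarrow> 'a \<Rightarrow> real) \<Rightarrow> ('s \<times> 'a \<times> 'a \<times> bool) list \<Rightarrow> real" where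
  "affinity alg r h = measure_pmf.expectation (sample_step alg h) (\<lambda>d. exp (- excess_loss r d / 2))"

definition log_lr_process :: "(('s \<times> 'a \<times> 'a \<times> bool) list \<Rightarrow> ('s \<Rightarrow> 'a \<Rightarrow> real))
    \<Rightarrow> ('s \<Rightarrow> 'a \<Rightarrow> real) \<Rightarrow> ('s \<times> 'a \<times> 'a \<times> bool) list \<Rightarrow> real" where
  "log_lr_process alg r h = (\<Sum>i<length h. - excess_loss r (h ! i) / 2 + 1 - affinity alg r (take i h))"

lemma log_lr_process_snoc:
  "log_lr_process alg r (h @ [d]) = log_lr_process alg r h + (- excess_loss r d / 2 + 1 - affinity alg r h)"
  unfolding log_lr_process_def by (auto simp: nth_append intro!: sum.cong)

lemma affinity_nonneg: "0 \<le> affinity alg r h"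
  by (simp add: affinity_def)

text \<open>\<open>exp \<circ> log_lr_process\<close> is a nonnegative supermartingale, because \<open>exp (1 - m) * m \<le> 1\<close>.\<close>

lemma nn_integral_exp_log_lr_process_snoc_le:
  assumes r: "r \<in> rewards"
  shows "(\<integral>\<^sup>+d. ennreal (exp (log_lr_process alg r (h @ [d]))) \<partial>measure_pmf (sample_step alg h))
    \<le> ennreal (exp (log_lr_process alg r h))"
proof -
  define m where "m = affinity alg r h"
  have "(\<integral>\<^sup>+d. ennreal (exp (log_lr_process alg r (h @ [d]))) \<partial>measure_pmf (sample_step alg h))
      = (\<integral>\<^sup>+d. ennreal (exp (log_lr_process alg r h + 1 - m)) * ennreal (exp (- excess_loss r d / 2))
          \<partial>measure_pmf (sample_step alg h))"
  proof (intro nn_integral_cong)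
    fix d
    have "exp (log_lr_process alg r (h @ [d])) = exp (log_lr_process alg r h + 1 - m) * exp (- excess_loss r d / 2)"
      by (simp add: log_lr_process_snoc m_def mult_exp_exp algebra_simps)
    then show "ennreal (exp (log_lr_process alg r (h @ [d])))
        = ennreal (exp (log_lr_process alg r h + 1 - m)) * ennreal (exp (- excess_loss r d / 2))"
      by (simp add: ennreal_mult')
  qed
  also have "\<dots> = ennreal (exp (log_lr_process alg r h + 1 - m))
      * (\<integral>\<^sup>+d. ennreal (exp (- excess_loss r d / 2)) \<partial>measure_pmf (sample_step alg h))"
    by (rule nn_integral_cmult) simp
  also have "(\<integral>\<^sup>+d. ennreal (exp (- excess_loss r d / 2)) \<partial>measure_pmf (sample_step alg h)) = ennreal m"
  proof -
    have "- excess_loss r d / 2 \<le> 1 + R" for d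
      using abs_excess_loss_le[OF r, of d] R_pos by (simp add: abs_le_iff)
    then show ?thesis unfolding m_def affinity_def
      by (intro nn_integral_eq_integral measure_pmf.integrable_const_bound[where B = "exp (1 + R)"]) auto
  qed
  also have "ennreal (exp (log_lr_process alg r h + 1 - m)) * ennreal m
      = ennreal (exp (log_lr_process alg r h) * (exp (1 - m) * m))"
    using affinity_nonneg[of alg r h] by (simp add: m_def ennreal_mult' mult_exp_exp algebra_simps)
  also have "\<dots> \<le> ennreal (exp (log_lr_process alg r h))"
    using exp_one_minus_mult_le_1[OF affinity_nonneg, of alg r h]
    by (intro ennreal_leI) (simp add: m_def mult_left_le)
  finally show ?thesis .
qed

lemma nn_integral_exp_log_lr_process_le_1:
  assumes r: "r \<in> rewards"
  shows "(\<integral>\<^sup>+h. ennreal (exp (log_lr_process alg r h)) \<partial>measure_pmf (gen_data \<rho> alg pref rstar n)) \<le> 1"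
proof (induction n)
  case 0
  then show ?case by (simp add: log_lr_process_def)
next
  case (Suc n)
  have "(\<integral>\<^sup>+h. ennreal (exp (log_lr_process alg r h)) \<partial>measure_pmf (gen_data \<rho> alg pref rstar (Suc n)))
      = (\<integral>\<^sup>+h. (\<integral>\<^sup>+d. ennreal (exp (log_lr_process alg r (h @ [d]))) \<partial>measure_pmf (sample_step alg h))
          \<partial>measure_pmf (gen_data \<rho> alg pref rstar n))"
    by (simp only: gen_data_Suc nn_integral_bind_pmf nn_integral_map_pmf)
  also have "\<dots> \<le> (\<integral>\<^sup>+h. ennreal (exp (log_lr_process alg r h)) \<partial>measure_pmf (gen_data \<rho> alg pref rstar n))"
    by (intro nn_integral_mono nn_integral_exp_log_lr_process_snoc_le[OF r])
  finally show ?case using Suc by simp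
qed

lemma prob_log_lr_process_ge:
  assumes r: "r \<in> rewards" and c: "0 < c"
  shows "measure_pmf.prob (gen_data \<rho> alg pref rstar n) {h. c \<le> exp (log_lr_process alg r h)} \<le> 1 / c"
proof -
  let ?M = "measure_pmf (gen_data \<rho> alg pref rstar n)"
  have nn: "(\<integral>\<^sup>+h. ennreal (exp (log_lr_process alg r h)) \<partial>?M) \<le> 1"
    by (rule nn_integral_exp_log_lr_process_le_1[OF r])
  then have int: "integrable ?M (\<lambda>h. exp (log_lr_process alg r h))"
    by (intro integrableI_nonneg) (auto simp: top_unique order_le_less_trans)
  have "ennreal (integral\<^sup>L ?M (\<lambda>h. exp (log_lr_process alg r h))) = (\<integral>\<^sup>+h. ennreal (exp (log_lr_process alg r h)) \<partial>?M)"
    by (rule nn_integral_eq_integral[symmetric]) (auto simp: int)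
  then have "integral\<^sup>L ?M (\<lambda>h. exp (log_lr_process alg r h)) \<le> 1"
    using nn by (metis ennreal_le_1)
  moreover have "measure ?M {h \<in> space ?M. c \<le> exp (log_lr_process alg r h)}
      \<le> integral\<^sup>L ?M (\<lambda>h. exp (log_lr_process alg r h)) / c"
    by (rule integral_Markov_inequality_measure[where A = UNIV]) (auto simp: int c)
  ultimately show ?thesis using c by (simp add: divide_right_mono order_trans)
qed

lemma conditional_mean_exp_excess_loss:
  fixes s :: 's
  assumes a: "a \<in> A" and a': "a' \<in> A"
  defines "z \<equiv> rstar s a - rstar s a'"
  shows "exp (- excess_loss r (s, a, a', True) / 2) * sigmoid z
      + exp (- excess_loss r (s, a, a', False) / 2) * (1 - sigmoid z)
    = sigmoid_affinity (r s a - r s a') z"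
proof -
  define x where "x = r s a - r s a'"
  have z: "ropt s a - ropt s a' = z" using ropt_eq[OF a] ropt_eq[OF a'] by (simp add: z_def)
  have "exp (- excess_loss r (s, a, a', True) / 2) = exp ((ln (sigmoid x) - ln (sigmoid z)) / 2)"
    using z by (simp add: excess_loss_def bt_loss_def x_def)
  then have 1: "exp (- excess_loss r (s, a, a', True) / 2) * sigmoid z = sqrt (sigmoid x) * sqrt (sigmoid z)"
    using sqrt_mult_sqrt_eq_exp_half_ln[where p = "sigmoid x" and q = "sigmoid z", OF sigmoid_pos sigmoid_pos] by (simp add: mult.commute)
  have "exp (- excess_loss r (s, a, a', False) / 2) = exp ((ln (sigmoid (- x)) - ln (sigmoid (- z))) / 2)"
  proof -
    have "r s a' - r s a = - x" "ropt s a' - ropt s a = - z" using z by (simp_all add: x_def)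
    then show ?thesis by (simp add: excess_loss_def bt_loss_def)
  qed
  then have 2: "exp (- excess_loss r (s, a, a', False) / 2) * (1 - sigmoid z) = sqrt (1 - sigmoid x) * sqrt (1 - sigmoid z)"
    using sqrt_mult_sqrt_eq_exp_half_ln[where p = "sigmoid (- x)" and q = "sigmoid (- z)", OF sigmoid_pos sigmoid_pos]
    by (simp add: sigmoid_minus mult.commute)
  show ?thesis using 1 2 by (simp add: sigmoid_affinity_def x_def)
qed

definition sq_error :: "('s \<Rightarrow> 'a \<Rightarrow> real) \<Rightarrow> ('s \<Rightarrow> 'a \<Rightarrow> real) \<Rightarrow> 's \<Rightarrow> real" where
  "sq_error p r s = (\<Sum>b\<in>A. \<Sum>c\<in>A. p s b * pref s c * ((rstar s b - r s b) - (rstar s c - r s c))\<^sup>2)"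

lemma sq_error_bounds:
  assumes pol: "is_policy A p" and r: "r \<in> rewards"
  shows "0 \<le> sq_error p r s" "sq_error p r s \<le> 4 * R\<^sup>2"
proof -
  have "((rstar s b - r s b) - (rstar s c - r s c))\<^sup>2 \<le> (2 * R)\<^sup>2" if "b \<in> A" "c \<in> A" for b c
    using rewards_range[OF r, of s b] rewards_range[OF r, of s c] rstar_range[OF that(1), of s]
      rstar_range[OF that(2), of s] by (intro power2_le_iff_abs_le[THEN iffD2]) (use R_pos in auto)
  then have "sq_error p r s \<le> (\<Sum>b\<in>A. \<Sum>c\<in>A. p s b * pref s c * (2 * R)\<^sup>2)" unfolding sq_error_def
    by (intro sum_mono mult_left_mono)
      (auto intro!: mult_nonneg_nonneg simp: is_policy_nonneg[OF pol] pref_pos less_imp_le)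
  then show "sq_error p r s \<le> 4 * R\<^sup>2"
    by (simp add: is_policy_sum[OF pol] is_policy_sum[OF policy_pref] power_mult_distrib
        flip: sum_distrib_right sum_distrib_left)
  show "0 \<le> sq_error p r s" unfolding sq_error_def
    using is_policy_nonneg[OF pol] pref_pos by (intro sum_nonneg mult_nonneg_nonneg) (auto intro: less_imp_le)
qed

definition mean_affinity :: "('s \<Rightarrow> 'a \<Rightarrow> real) \<Rightarrow> ('s \<Rightarrow> 'a \<Rightarrow> real) \<Rightarrow> 's \<Rightarrow> real" where
  "mean_affinity p r s = (\<Sum>a\<in>A. p s a * (\<Sum>a'\<in>A. pref s a' *
     sigmoid_affinity (r s a - r s a') (rstar s a - rstar s a')))"

lemma affinity_eq:
  assumes pol: "is_policy A (alg h)" and r: "r \<in> rewards"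
  shows "affinity alg r h = E\<rho> (mean_affinity (alg h) r)"
proof -
  have "\<bar>exp (- excess_loss r d / 2)\<bar> \<le> exp (1 + R)" for d
    using abs_excess_loss_le[OF r, of d] R_pos by (simp add: abs_le_iff)
  then have "affinity alg r h = E\<rho> (\<lambda>s. \<Sum>a\<in>A. alg h s a * (\<Sum>a'\<in>A. pref s a' *
      (exp (- excess_loss r (s, a, a', True) / 2) * sigmoid (rstar s a - rstar s a')
        + exp (- excess_loss r (s, a, a', False) / 2) * (1 - sigmoid (rstar s a - rstar s a')))))"
    unfolding affinity_def by (rule expectation_sample_step[where alg = alg and h = h, OF pol])
  also have "\<dots> = E\<rho> (mean_affinity (alg h) r)"
    unfolding mean_affinity_def using conditional_mean_exp_excess_loss[where r = r]
    by (auto intro!: Bochner_Integration.integral_cong sum.cong)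
  finally show ?thesis .
qed

lemma mean_affinity_bounds:
  assumes pol: "is_policy A p"
  shows "0 \<le> mean_affinity p r s" "mean_affinity p r s \<le> 1"
proof -
  show "0 \<le> mean_affinity p r s" unfolding mean_affinity_def
    using is_policy_nonneg[OF pol] pref_pos sigmoid_affinity_bounds
    by (intro sum_nonneg mult_nonneg_nonneg) (auto intro: less_imp_le)
  have "mean_affinity p r s \<le> (\<Sum>a\<in>A. p s a * (\<Sum>a'\<in>A. pref s a' * 1))" unfolding mean_affinity_def
    using is_policy_nonneg[OF pol] pref_pos sigmoid_affinity_bounds
    by (intro sum_mono mult_left_mono) (auto intro: less_imp_le)
  then show "mean_affinity p r s \<le> 1"
    by (simp add: is_policy_sum[OF pol] is_policy_sum[OF policy_pref])
qed

lemma sq_error_le_one_minus_mean_affinity: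
  assumes pol: "is_policy A p" and r: "r \<in> rewards"
  shows "exp (- 2 * R) / 64 * sq_error p r s \<le> 1 - mean_affinity p r s"
proof -
  have "exp (- 2 * R) / 64 * sq_error p r s = (\<Sum>a\<in>A. p s a * (\<Sum>a'\<in>A. pref s a'
      * (exp (- 2 * R) / 64 * ((r s a - r s a') - (rstar s a - rstar s a'))\<^sup>2)))"
    unfolding sq_error_def sum_distrib_left by (intro sum.cong refl) (simp add: algebra_simps power2_eq_square)
  also have "\<dots> \<le> (\<Sum>a\<in>A. p s a * (\<Sum>a'\<in>A. pref s a' *
      (1 - sigmoid_affinity (r s a - r s a') (rstar s a - rstar s a'))))"
  proof (intro sum_mono mult_left_mono)
    fix a a' assume "a \<in> A" "a' \<in> A"
    then show "exp (- 2 * R) / 64 * ((r s a - r s a') - (rstar s a - rstar s a'))\<^sup>2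
        \<le> 1 - sigmoid_affinity (r s a - r s a') (rstar s a - rstar s a')"
      using rewards_range[OF r, of s a] rewards_range[OF r, of s a'] rstar_range[of a s] rstar_range[of a' s]
      by (intro one_minus_sigmoid_affinity_ge) auto
  qed (auto simp: is_policy_nonneg[OF pol] pref_pos less_imp_le)
  also have "\<dots> = 1 - mean_affinity p r s"
    by (simp add: mean_affinity_def right_diff_distrib sum_subtractf is_policy_sum[OF pol]
        is_policy_sum[OF policy_pref])
  finally show ?thesis .
qed

lemma one_minus_affinity_ge:
  assumes pol: "is_policy A (alg h)" and r: "r \<in> rewards"
  shows "exp (- 2 * R) / 64 * E\<rho> (sq_error (alg h) r) \<le> 1 - affinity alg r h"
proof -
  have "exp (- 2 * R) / 64 * E\<rho> (sq_error (alg h) r) = E\<rho> (\<lambda>s. exp (- 2 * R) / 64 * sq_error (alg h) r s)"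
    by simp
  also have "\<dots> \<le> E\<rho> (\<lambda>s. 1 - mean_affinity (alg h) r s)"
  proof (rule integral_mono)
    show "integrable \<rho> (\<lambda>s. exp (- 2 * R) / 64 * sq_error (alg h) r s)"
      using sq_error_bounds[OF pol r]
      by (intro integrable_mult_right integrable_measure_pmf_bounded[where B = "4 * R\<^sup>2"]) simp
    show "integrable \<rho> (\<lambda>s. 1 - mean_affinity (alg h) r s)"
      using mean_affinity_bounds[OF pol]
      by (intro integrable_measure_pmf_bounded[where B = 1]) (simp add: abs_le_iff)
  qed (rule sq_error_le_one_minus_mean_affinity[OF pol r])
  also have "\<dots> = 1 - E\<rho> (mean_affinity (alg h) r)"
    using mean_affinity_bounds[OF pol] by (subst Bochner_Integration.integral_diff)
      (auto intro!: integrable_measure_pmf_bounded[where B = 1] simp: abs_le_iff)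
  finally show ?thesis using affinity_eq[where alg = alg and h = h, OF pol r] by simp
qed

lemma advantage_gap_le:
  assumes p: "is_policy A p" and l: "0 < l"
  shows "advantage_gap r s \<le> l * (1 + 15 * exp (R / \<beta>) * KL_s A p opt s) + 3 / (2 * l) * sq_error p r s"
proof -
  interpret coverage A "p s" "opt s" "pref s" "exp (R / \<beta>)"
    by unfold_locales (use finite_A is_policy_nonneg[OF p] is_policy_sum[OF p] opt_pos opt_sum pref_pos
        is_policy_sum[OF policy_pref] opt_le R_pos beta_pos in auto)
  have "advantage_gap r s = (\<Sum>a\<in>A. opt s a * (rstar s a - r s a)) - (\<Sum>a\<in>A. pref s a * (rstar s a - r s a))"
    by (simp add: advantage_gap_def advantage_def right_diff_distrib sum_subtractf)
  also have "\<dots> \<le> l * (1 + 15 * exp (R / \<beta>) * kl) + 3 / (2 * l) * spread (\<lambda>a. rstar s a - r s a)"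
    by (rule coverage_le[OF l])
  finally show ?thesis by (simp add: kl_def spread_def sq_error_def KL_opt_eq[OF p])
qed

lemma expectation_advantage_gap_le:
  assumes p: "p \<in> conv_pol P" and r: "r \<in> rewards" and l: "0 < l"
  shows "E\<rho> (advantage_gap r)
    \<le> l * (1 + 15 * exp (R / \<beta>) * E\<rho> (\<lambda>s. KL_s A p opt s)) + 3 / (2 * l) * E\<rho> (sq_error p r)"
proof -
  have pol: "is_policy A p" by (rule policy_conv_pol[OF p])
  have KL: "integrable \<rho> (\<lambda>s. KL_s A p opt s)"
    by (rule integrable_measure_pmf_bounded) (rule abs_KL_opt_le[OF p])
  have sq: "integrable \<rho> (sq_error p r)"
    using sq_error_bounds[OF pol r] by (intro integrable_measure_pmf_bounded[where B = "4 * R\<^sup>2"]) simp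
  have "E\<rho> (advantage_gap r) \<le> E\<rho> (\<lambda>s. l * (1 + 15 * exp (R / \<beta>) * KL_s A p opt s) + 3 / (2 * l) * sq_error p r s)"
  proof (rule integral_mono)
    show "integrable \<rho> (advantage_gap r)"
      using abs_advantage_gap_le[OF r] by (rule integrable_measure_pmf_bounded)
    show "integrable \<rho> (\<lambda>s. l * (1 + 15 * exp (R / \<beta>) * KL_s A p opt s) + 3 / (2 * l) * sq_error p r s)"
      using KL sq by simp
  qed (rule advantage_gap_le[OF pol l])
  also have "\<dots> = l * (1 + 15 * exp (R / \<beta>) * E\<rho> (\<lambda>s. KL_s A p opt s)) + 3 / (2 * l) * E\<rho> (sq_error p r)"
    using KL sq by (simp add: distrib_left)
  finally show ?thesis .
qed

lemma card_P_pos: "0 < card P"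
  using finite_P opt_in_P by (auto simp: card_gt_0_iff)

lemma exp_le_kappa: "exp (R / \<beta>) \<le> kappa (exp (2 * R / \<beta>))"
proof -
  have "exp (R / \<beta>) \<le> exp (2 * R / \<beta>)" using R_pos beta_pos by (simp add: divide_right_mono)
  also have "\<dots> \<le> kappa (exp (2 * R / \<beta>))" using R_pos beta_pos by (intro le_kappa) simp
  finally show ?thesis .
qed

lemma regret_eq_sum_KL:
  assumes alg: "\<And>h. alg h \<in> conv_pol P"
  shows "regret \<rho> A pref \<beta> rstar alg h = \<beta> * (\<Sum>t<length h. E\<rho> (\<lambda>s. KL_s A (alg (take t h)) opt s))"
  by (simp add: regret_def J_opt_minus_J[OF alg] sum_distrib_left)

lemma averaged_advantage_gap_le:
  fixes l :: real
  assumes alg: "\<And>h. alg h \<in> conv_pol P" and r: "r \<in> rewards" and l: "0 < l"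
  shows "length h * E\<rho> (advantage_gap r)
    \<le> length h * l + 15 * l * exp (R / \<beta>) * (\<Sum>t<length h. E\<rho> (\<lambda>s. KL_s A (alg (take t h)) opt s))
      + 3 / (2 * l) * (\<Sum>t<length h. E\<rho> (sq_error (alg (take t h)) r))"
proof -
  have "length h * E\<rho> (advantage_gap r) = (\<Sum>t<length h. E\<rho> (advantage_gap r))" by simp
  also have "\<dots> \<le> (\<Sum>t<length h. l * (1 + 15 * exp (R / \<beta>) * E\<rho> (\<lambda>s. KL_s A (alg (take t h)) opt s))
      + 3 / (2 * l) * E\<rho> (sq_error (alg (take t h)) r))"
    by (intro sum_mono expectation_advantage_gap_le alg r l)
  also have "\<dots> = length h * l + 15 * l * exp (R / \<beta>) * (\<Sum>t<length h. E\<rho> (\<lambda>s. KL_s A (alg (take t h)) opt s))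
      + 3 / (2 * l) * (\<Sum>t<length h. E\<rho> (sq_error (alg (take t h)) r))"
    by (simp add: sum.distrib sum_distrib_left algebra_simps)
  finally show ?thesis .
qed

lemma sum_sq_error_le:
  assumes alg: "\<And>h. alg h \<in> conv_pol P" and r: "r \<in> rewards" and h: "0 < length h"
  shows "exp (- 2 * R) / 64 * (\<Sum>t<length h. E\<rho> (sq_error (alg (take t h)) r))
    \<le> log_lr_process alg r h + length h * (L_D h r - L_D h ropt) / 2"
proof -
  have "exp (- 2 * R) / 64 * (\<Sum>t<length h. E\<rho> (sq_error (alg (take t h)) r))
      \<le> (\<Sum>t<length h. 1 - affinity alg r (take t h))"
    unfolding sum_distrib_left
    by (intro sum_mono one_minus_affinity_ge policy_conv_pol[OF alg] r)
  also have "\<dots> = log_lr_process alg r h + (\<Sum>t<length h. excess_loss r (h ! t)) / 2"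
    unfolding log_lr_process_def sum_divide_distrib sum.distrib[symmetric] by (intro sum.cong) simp_all
  finally show ?thesis by (simp add: sum_excess_loss[OF h])
qed

lemma advantage_gap_le_on_good_event:
  fixes \<eta> :: real
  assumes alg: "\<And>h. alg h \<in> conv_pol P" and h: "0 < length h" and r: "r \<in> rewards" and \<eta>: "0 < \<eta>"
    and budget: "15 * exp (R / \<beta>) * (\<Sum>t<length h. E\<rho> (\<lambda>s. KL_s A (alg (take t h)) opt s)) \<le> length h"
    and concentration: "log_lr_process alg r h \<le> L"
  shows "E\<rho> (advantage_gap r) - (L_D h r - L_D h ropt) / \<eta> \<le> 96 * exp (2 * R) * \<eta> + 2 * L / (length h * \<eta>)"
proof -
  define T a where "T = real (length h)" and "a = 1 / (64 * exp (2 * R))"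
  \<comment> \<open>\<open>l\<close> makes the squared-error term of the change of measure cancel against the concentration bound\<close>
  define l where "l = 3 * \<eta> / (4 * a)"
  have T: "1 \<le> T" using h by (simp add: T_def Suc_le_eq)
  have a: "0 < a" and l: "0 < l" using \<eta> by (simp_all add: a_def l_def)
  define SK SV D where "SK = (\<Sum>t<length h. E\<rho> (\<lambda>s. KL_s A (alg (take t h)) opt s))"
    and "SV = (\<Sum>t<length h. E\<rho> (sq_error (alg (take t h)) r))" and "D = L_D h r - L_D h ropt"
  have avg: "T * E\<rho> (advantage_gap r) \<le> T * l + 15 * l * exp (R / \<beta>) * SK + 3 / (2 * l) * SV"
    using averaged_advantage_gap_le[where alg = alg, OF alg r l, of h] unfolding T_def SK_def SV_def .
  have "15 * l * exp (R / \<beta>) * SK \<le> T * l"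
    using mult_left_mono[OF budget, of l] l by (simp add: T_def SK_def ac_simps)
  moreover have "3 / (2 * l) * SV = 2 / \<eta> * (a * SV)"
    unfolding l_def using a \<eta> by (simp add: field_simps)
  moreover have "exp (- 2 * R) / 64 = a"
    unfolding a_def using exp_minus_inverse[of "2 * R"] by (simp add: field_simps)
  then have "a * SV \<le> L + T * D / 2"
    using sum_sq_error_le[where alg = alg, OF alg r h] concentration by (simp add: SV_def T_def D_def)
  then have "2 / \<eta> * (a * SV) \<le> 2 / \<eta> * (L + T * D / 2)"
    using \<eta> by (intro mult_left_mono) auto
  moreover have "2 / \<eta> * (L + T * D / 2) = T * (D / \<eta>) + T * (2 * L / (T * \<eta>))"
    using T \<eta> by (simp add: field_simps)
  ultimately have "T * E\<rho> (advantage_gap r) \<le> T * l + T * l + T * (D / \<eta>) + T * (2 * L / (T * \<eta>))"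
    using avg by linarith
  also have "\<dots> = T * (2 * l + D / \<eta> + 2 * L / (T * \<eta>))" by (simp add: algebra_simps)
  finally have "E\<rho> (advantage_gap r) - D / \<eta> \<le> 2 * l + 2 * L / (T * \<eta>)"
    using T by simp
  moreover have "2 * l = 96 * exp (2 * R) * \<eta>"
    unfolding l_def a_def by (simp add: field_simps)
  ultimately show ?thesis by (simp add: D_def T_def)
qed

lemma J_gap_le_on_good_event:
  assumes alg: "\<And>h. alg h \<in> conv_pol P" and h: "0 < length h"
    and p: "p \<in> RPO_solutions \<rho> A pref \<beta> (conv_pol P) rewards h (1 / sqrt (length h))"
    and budget: "15 * exp (R / \<beta>) * (\<Sum>t<length h. E\<rho> (\<lambda>s. KL_s A (alg (take t h)) opt s)) \<le> length h"
    and concentration: "\<And>r. r \<in> rewards \<Longrightarrow> log_lr_process alg r h \<le> L"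
  shows "J opt - J p \<le> (96 * exp (2 * R) + 2 * L) / sqrt (length h)"
proof -
  obtain r where r: "r \<in> rewards"
    and gap: "J opt - J p \<le> E\<rho> (advantage_gap r) - (L_D h r - L_D h ropt) / (1 / sqrt (length h))"
    using J_gap_le_of_RPO_solution[OF p] by blast
  note gap
  also have "\<dots> \<le> 96 * exp (2 * R) * (1 / sqrt (length h)) + 2 * L / (length h * (1 / sqrt (length h)))"
    using h by (intro advantage_gap_le_on_good_event[where alg = alg, OF alg h r _ budget concentration[OF r]]) simp
  also have "\<dots> = (96 * exp (2 * R) + 2 * L) / sqrt (length h)"
    using h by (simp add: field_simps real_div_sqrt)
  finally show ?thesis .
qed

lemma prob_log_lr_process_bounded:
  assumes \<delta>: "0 < \<delta>"
  shows "1 - \<delta> \<le> measure_pmf.prob (gen_data \<rho> alg pref rstar n)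
    {h. \<forall>r\<in>rewards. log_lr_process alg r h < ln (card P / \<delta>)}"
proof -
  let ?M = "measure_pmf (gen_data \<rho> alg pref rstar n)"
  define N where "N = real (card P)"
  have N: "1 \<le> N" using card_P_pos by (simp add: N_def)
  have "0 < N / \<delta>" using N \<delta> by simp
  then have iff: "y < ln (N / \<delta>) \<longleftrightarrow> exp y < N / \<delta>" for y
    by (metis exp_less_cancel_iff exp_ln)
  have "UNIV - {h. \<forall>r\<in>rewards. log_lr_process alg r h < ln (N / \<delta>)}
      = (\<Union>r\<in>rewards. {h. N / \<delta> \<le> exp (log_lr_process alg r h)})"
    using iff by (auto simp: not_less)
  then have "measure ?M (UNIV - {h. \<forall>r\<in>rewards. log_lr_process alg r h < ln (N / \<delta>)})
      \<le> (\<Sum>r\<in>rewards. measure ?M {h. N / \<delta> \<le> exp (log_lr_process alg r h)})"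
    using finite_rewards by (simp add: measure_pmf.finite_measure_subadditive_finite)
  also have "\<dots> \<le> (\<Sum>r\<in>rewards. 1 / (N / \<delta>))"
    using N \<delta> by (intro sum_mono prob_log_lr_process_ge) auto
  also have "\<dots> = (\<Sum>r\<in>rewards. \<delta> / N)" by simp
  also have "\<dots> = card rewards * (\<delta> / N)" by simp
  also have "\<dots> \<le> N * (\<delta> / N)"
    using finite_rewards(3) N \<delta> by (intro mult_right_mono) (auto simp: N_def)
  also have "\<dots> = \<delta>" using N by simp
  finally show ?thesis
    using measure_pmf.prob_compl[of "{h. \<forall>r\<in>rewards. log_lr_process alg r h < ln (N / \<delta>)}"] by (simp add: N_def)
qed

lemma J_gap_le_given_regret_bound:
  fixes c0 Cc \<delta> :: real and T k0 :: nat
  defines "pl \<equiv> polylog_base (card P) T \<delta>"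
  assumes alg: "\<And>h. alg h \<in> conv_pol P" and \<delta>: "0 < \<delta>" "\<delta> < 1" and T: "1 \<le> T"
    and large_T: "225 * c0\<^sup>2 * Cc\<^sup>2 * (kappa (exp (2 * R / \<beta>)))\<^sup>2 * pl ^ (2 * k0 + 2) / \<beta>\<^sup>2 \<le> real T"
    and h: "length h = T"
    and regret: "regret \<rho> A pref \<beta> rstar alg h \<le> c0 * Cc * sqrt (real T) * pl ^ k0"
    and concentration: "\<forall>r\<in>rewards. log_lr_process alg r h < ln (card P / \<delta>)"
    and p: "p \<in> RPO_solutions \<rho> A pref \<beta> (conv_pol P) rewards h (1 / sqrt (real T))"
  shows "J opt - J p \<le> 98 * exp (2 * R) / sqrt (real T) * pl ^ (2 * k0 + 2)"
proof -
  have pl: "1 \<le> pl" "ln (card P / \<delta>) \<le> pl"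
    using polylog_base_bounds[of "card P" T \<delta>] card_P_pos T \<delta> by (simp_all add: pl_def Suc_le_eq)
  define SK where "SK = (\<Sum>t<length h. E\<rho> (\<lambda>s. KL_s A (alg (take t h)) opt s))"
  have "0 \<le> SK"
    unfolding SK_def by (intro sum_nonneg integral_nonneg_AE AE_pmfI KL_opt_nonneg policy_conv_pol alg)
  then have budget: "15 * exp (R / \<beta>) * SK \<le> length h"
    using T h beta_pos exp_le_kappa regret large_T pl(1)
    by (intro coverage_budget[where c = c0 and C = Cc and k = k0])
      (simp_all add: SK_def regret_eq_sum_KL[where alg = alg, OF alg])
  have "log_lr_process alg r h \<le> ln (card P / \<delta>)" if "r \<in> rewards" for r
    using concentration that by (simp add: less_imp_le)
  then have "J opt - J p \<le> (96 * exp (2 * R) + 2 * ln (card P / \<delta>)) / sqrt (real T)"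
    using J_gap_le_on_good_event[where alg = alg, OF alg _ p[folded h] budget[unfolded SK_def]] T h
    by simp
  also have "\<dots> \<le> 98 * exp (2 * R) / sqrt (real T) * pl ^ (2 * k0 + 2)"
  proof -
    have e: "1 \<le> exp (2 * R)" using R_pos by simp
    have "exp (2 * R) * 1 \<le> exp (2 * R) * pl" using pl(1) by (intro mult_left_mono) auto
    moreover have "1 * pl \<le> exp (2 * R) * pl" using e pl(1) by (intro mult_right_mono) auto
    moreover have "exp (2 * R) * pl \<le> exp (2 * R) * pl ^ (2 * k0 + 2)"
      using pl(1) power_increasing[of 1 "2 * k0 + 2" pl] by (intro mult_left_mono) auto
    ultimately have "96 * exp (2 * R) + 2 * ln (card P / \<delta>) \<le> 98 * (exp (2 * R) * pl ^ (2 * k0 + 2))"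
      using pl(2) by linarith
    then show ?thesis using T by (simp add: divide_right_mono)
  qed
  finally show ?thesis .
qed

lemma rpo_guarantee:
  fixes c0 Cc \<delta> :: real and T k0 :: nat
  defines "pl \<equiv> polylog_base (card P) T \<delta>"
  assumes alg: "\<And>h. alg h \<in> conv_pol P" and \<delta>: "0 < \<delta>" "\<delta> < 1" and T: "1 \<le> T"
    and regret: "1 - \<delta> \<le> measure_pmf.prob (gen_data \<rho> alg pref rstar T)
      {h. regret \<rho> A pref \<beta> rstar alg h \<le> c0 * Cc * sqrt (real T) * pl ^ k0}"
    and large_T: "225 * c0\<^sup>2 * Cc\<^sup>2 * (kappa (exp (2 * R / \<beta>)))\<^sup>2 * pl ^ (2 * k0 + 2) / \<beta>\<^sup>2 \<le> real T"
  shows "1 - 2 * \<delta> \<le> measure_pmf.prob (gen_data \<rho> alg pref rstar T)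
    {h. \<forall>p \<in> RPO_solutions \<rho> A pref \<beta> (conv_pol P) rewards h (1 / sqrt (real T)).
      J opt - J p \<le> 98 * exp (2 * R) / sqrt (real T) * pl ^ (2 * k0 + 2)}"
    (is "_ \<le> measure_pmf.prob ?G ?target")
proof -
  define Ereg Econc where "Ereg = {h. regret \<rho> A pref \<beta> rstar alg h \<le> c0 * Cc * sqrt (real T) * pl ^ k0}"
    and "Econc = {h. \<forall>r\<in>rewards. log_lr_process alg r h < ln (card P / \<delta>)}"
  have "Ereg \<inter> Econc \<inter> set_pmf ?G \<subseteq> ?target"
  proof (intro subsetI CollectI ballI)
    fix h p
    assume "h \<in> Ereg \<inter> Econc \<inter> set_pmf ?G" and p: "p \<in> RPO_solutions \<rho> A pref \<beta> (conv_pol P) rewards h (1 / sqrt T)"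
    then show "J opt - J p \<le> 98 * exp (2 * R) / sqrt (real T) * pl ^ (2 * k0 + 2)"
      using J_gap_le_given_regret_bound[where alg = alg, OF alg \<delta> T large_T[unfolded pl_def] length_gen_data[of h alg T]]
      by (simp add: Ereg_def Econc_def pl_def)
  qed
  then have "measure_pmf.prob ?G (Ereg \<inter> Econc) \<le> measure_pmf.prob ?G ?target"
    by (subst measure_Int_set_pmf[symmetric]) (auto intro!: measure_pmf.finite_measure_mono)
  moreover have "1 - \<delta> \<le> measure_pmf.prob ?G Econc"
    unfolding Econc_def by (rule prob_log_lr_process_bounded[OF \<delta>(1)])
  moreover have "measure_pmf.prob ?G Ereg + measure_pmf.prob ?G Econc
      \<le> 1 + measure_pmf.prob ?G (Ereg \<inter> Econc)"
    using measure_Un3[of Ereg ?G Econc] measure_pmf.prob_le_1[of ?G "Ereg \<union> Econc"]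
    by (simp add: fmeasurable_def measure_pmf.emeasure_finite less_top[symmetric])
  ultimately show ?thesis using regret by (simp add: Ereg_def)
qed

end

theorem corollaryE6:
  shows "\<forall>c0>0. \<forall>k0::nat. \<exists>c1>0. \<exists>c2>0. \<exists>k::nat.
    \<exists>etaf :: nat \<Rightarrow> real \<Rightarrow> real \<Rightarrow> nat \<Rightarrow> real \<Rightarrow> real \<Rightarrow> real.
    \<forall>(A :: 'a set) (\<rho> :: 's pmf) (pref :: 's \<Rightarrow> 'a \<Rightarrow> real) (\<beta>::real) (R::real)
      (rstar :: 's \<Rightarrow> 'a \<Rightarrow> real) (P :: ('s \<Rightarrow> 'a \<Rightarrow> real) set)
      (alg :: ('s \<times> 'a \<times> 'a \<times> bool) list \<Rightarrow> ('s \<Rightarrow> 'a \<Rightarrow> real)) (T::nat) (\<delta>::real) (Cc::real).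
      finite A \<and> A \<noteq> {} \<and> is_policy A pref \<and> (\<forall>s. \<forall>a\<in>A. 0 < pref s a)
      \<and> 0 < \<beta> \<and> 0 < R \<and> (\<forall>s. \<forall>a\<in>A. 0 \<le> rstar s a \<and> rstar s a \<le> R)
      \<and> finite P \<and> (\<forall>p\<in>P. is_policy A p)
      \<and> pi_star A pref \<beta> rstar \<in> P
      \<and> (\<forall>p\<in>P. \<forall>s. \<forall>a\<in>A. \<bar>ln (p s a / pref s a)\<bar> \<le> R / \<beta>)
      \<and> (\<forall>h. alg h \<in> conv_pol P)
      \<and> 0 < \<delta> \<and> \<delta> < 1 \<and> 1 \<le> T \<and> 0 \<le> Cc
      \<and> measure_pmf.prob (gen_data \<rho> alg pref rstar T)
          {h. regret \<rho> A pref \<beta> rstar alg h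
                \<le> c0 * Cc * sqrt (real T) * polylog_base (card P) T \<delta> ^ k0} \<ge> 1 - \<delta>
      \<and> real T \<ge> c1 * Cc^2 * (kappa (exp (2 * R / \<beta>)))^2 * polylog_base (card P) T \<delta> ^ k / \<beta>^2
      \<longrightarrow> measure_pmf.prob (gen_data \<rho> alg pref rstar T)
          {h. \<forall>p \<in> RPO_solutions \<rho> A pref \<beta> (conv_pol P) (reward_class A pref \<beta> R P) h
                       (etaf T \<beta> R (card P) \<delta> Cc).
                J_beta \<rho> A pref \<beta> rstar (pi_star A pref \<beta> rstar) - J_beta \<rho> A pref \<beta> rstar p
                  \<le> c2 * exp (2 * R) / sqrt (real T) * polylog_base (card P) T \<delta> ^ k} \<ge> 1 - 2 * \<delta>"
  apply (intro allI impI)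
  subgoal for c0 k0
    apply (rule exI[where x = "225 * c0\<^sup>2"], rule conjI, simp)
    apply (rule exI[where x = 98], rule conjI, simp)
    apply (rule exI[where x = "2 * k0 + 2"], rule exI[where x = "\<lambda>T _ _ _ _ _. 1 / sqrt (real T)"])
    apply (intro allI impI, elim conjE)
    subgoal premises prems for A \<rho> pref \<beta> R rstar P alg T \<delta> Cc
    proof -
      interpret rpo_setting A \<rho> pref \<beta> R rstar P
        by unfold_locales (use prems in auto)
      show ?thesis
        using rpo_guarantee[of alg \<delta> T c0 Cc k0] prems by simp
    qed
    done
  done

end
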